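(* Let $R$ be a commutative ring with unit, $I$ an ideal of $R$, and $M$ an $R$-module. (1) If $I$ is principal, then $H_R(I,M)=0$. (2) If $R$ is an integral domain and $M$ is torsion-free, then $H_R(I,M)=0$. (3) If $R$ is a Dedekind domain, then $H_R(I,M)=0$. (4) If $R$ is a reduced ring with finitely many minimal prime ideals (in particular, a reduced noetherian ring), then $H_R(I,R)=0$.
   Context: $Z_R(I,M)=\{\varphi\in\mathrm{Hom}_R(I,M):\varphi(t)\in tM\text{ for all }t\in I\}$; $B_R(I,M)$ is the submodule of $\varphi\in Z_R(I,M)$ for which there exists $m\in M$ with $\varphi(t)=tm$ for all $t\in I$; $H_R(I,M)=Z_R(I,M)/B_R(I,M)$. *)

theory Defs
  imports "HOL-Algebra.Algebra"
begin

definition Hom_ideal :: "('a, 'c) ring_scheme \<Rightarrow> 'a set \<Rightarrow> ('a, 'b, 'd) module_scheme \<Rightarrow> ('a \<Rightarrow> 'b) set"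
  where "Hom_ideal R I M =
    {\<phi> \<in> I \<rightarrow>\<^sub>E carrier M.
       (\<forall>x\<in>I. \<forall>y\<in>I. \<phi> (x \<oplus>\<^bsub>R\<^esub> y) = \<phi> x \<oplus>\<^bsub>M\<^esub> \<phi> y) \<and>
       (\<forall>r\<in>carrier R. \<forall>x\<in>I. \<phi> (r \<otimes>\<^bsub>R\<^esub> x) = r \<odot>\<^bsub>M\<^esub> \<phi> x)}"

definition Z_R :: "('a, 'c) ring_scheme \<Rightarrow> 'a set \<Rightarrow> ('a, 'b, 'd) module_scheme \<Rightarrow> ('a \<Rightarrow> 'b) set"
  where "Z_R R I M = {\<phi> \<in> Hom_ideal R I M. \<forall>t\<in>I. \<exists>m\<in>carrier M. \<phi> t = t \<odot>\<^bsub>M\<^esub> m}"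

definition B_R :: "('a, 'c) ring_scheme \<Rightarrow> 'a set \<Rightarrow> ('a, 'b, 'd) module_scheme \<Rightarrow> ('a \<Rightarrow> 'b) set"
  where "B_R R I M = {\<phi> \<in> Z_R R I M. \<exists>m\<in>carrier M. \<forall>t\<in>I. \<phi> t = t \<odot>\<^bsub>M\<^esub> m}"

text \<open>H_R(I,M) = Z_R(I,M)/B_R(I,M) is zero iff B_R(I,M) = Z_R(I,M).\<close>
definition H_R_zero :: "('a, 'c) ring_scheme \<Rightarrow> 'a set \<Rightarrow> ('a, 'b, 'd) module_scheme \<Rightarrow> bool"
  where "H_R_zero R I M \<longleftrightarrow> Z_R R I M = B_R R I M"

definition self_module :: "'a ring \<Rightarrow> ('a, 'a) module"
  where "self_module R = ring.extend R \<lparr>smult = monoid.mult R\<rparr>"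

definition torsion_free :: "('a, 'c) ring_scheme \<Rightarrow> ('a, 'b, 'd) module_scheme \<Rightarrow> bool"
  where "torsion_free R M \<longleftrightarrow>
    (\<forall>r\<in>carrier R. \<forall>m\<in>carrier M. r \<odot>\<^bsub>M\<^esub> m = \<zero>\<^bsub>M\<^esub> \<longrightarrow> r = \<zero>\<^bsub>R\<^esub> \<or> m = \<zero>\<^bsub>M\<^esub>)"

text \<open>Integrally closed domain: every element a/b (b \<noteq> 0) of the fraction field that is
  integral over R lies in R.  Clearing denominators: if a^n + sum c_i a^i b^(n-i) = 0 then b | a.\<close>
definition integrally_closed :: "('a, 'c) ring_scheme \<Rightarrow> bool"
  where "integrally_closed R \<longleftrightarrow>
    (\<forall>a\<in>carrier R. \<forall>b\<in>carrier R - {\<zero>\<^bsub>R\<^esub>}. \<forall>n::nat. \<forall>c.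
       n \<ge> 1 \<and> c \<in> {..<n} \<rightarrow> carrier R \<and>
       a [^]\<^bsub>R\<^esub> n \<oplus>\<^bsub>R\<^esub>
         (\<Oplus>\<^bsub>R\<^esub>i\<in>{..<n}. c i \<otimes>\<^bsub>R\<^esub> a [^]\<^bsub>R\<^esub> i \<otimes>\<^bsub>R\<^esub> b [^]\<^bsub>R\<^esub> (n - i)) = \<zero>\<^bsub>R\<^esub>
       \<longrightarrow> (\<exists>x\<in>carrier R. a = b \<otimes>\<^bsub>R\<^esub> x))"

definition dedekind_domain :: "('a, 'c) ring_scheme \<Rightarrow> bool"
  where "dedekind_domain R \<longleftrightarrow>
    noetherian_domain R \<and> integrally_closed R \<and>
    (\<forall>P. primeideal P R \<and> P \<noteq> {\<zero>\<^bsub>R\<^esub>} \<longrightarrow> maximalideal P R)"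

definition reduced_ring :: "('a, 'c) ring_scheme \<Rightarrow> bool"
  where "reduced_ring R \<longleftrightarrow>
    (\<forall>x\<in>carrier R. \<forall>n::nat. x [^]\<^bsub>R\<^esub> n = \<zero>\<^bsub>R\<^esub> \<longrightarrow> x = \<zero>\<^bsub>R\<^esub>)"

definition minimal_prime :: "'a set \<Rightarrow> ('a, 'c) ring_scheme \<Rightarrow> bool"
  where "minimal_prime P R \<longleftrightarrow>
    primeideal P R \<and> (\<forall>Q. primeideal Q R \<and> Q \<subseteq> P \<longrightarrow> Q = P)"

end

theory Submission
  imports Defs
begin

(* The elements g for which g\<phi> is a coboundary form an ideal, the annihilator of the class of \<phi>;
   H_R(I,M) = 0 says that it contains 1 for every cocycle \<phi>.  For I = (a) this is immediate.
   If some a \<in> I can be cancelled, then a \<phi>(t) = \<phi>(a t) = t \<phi>(a) = a (t m) forces \<phi>(t) = t m: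
   any a \<noteq> 0 can be when M is torsion-free; in a reduced ring with finitely many minimal primes,
   prime avoidance gives a \<in> I outside every minimal prime not containing I, and then a d = 0 with
   d \<in> I puts d into every minimal prime, so d = 0.  In a Dedekind domain every nonzero ideal is
   invertible, I Q = (c) (Noether's argument: products of primes, integral closedness, maximal
   counterexamples); writing t q = c g for t \<in> I, q \<in> Q, each such g annihilates \<phi>, and c \<in> I Q
   gives c = c g for an annihilator g, i.e. g = 1. *)

section \<open>Products and quotients of ideals\<close>

lemma (in cring) ideal_closedI:
  assumes "S \<subseteq> carrier R" "\<zero> \<in> S"
    and "\<And>x y. x \<in> S \<Longrightarrow> y \<in> S \<Longrightarrow> x \<oplus> y \<in> S"
    and "\<And>r x. r \<in> carrier R \<Longrightarrow> x \<in> S \<Longrightarrow> r \<otimes> x \<in> S"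
  shows "ideal S R"
proof (rule idealI[OF ring_axioms])
  show "subgroup S (add_monoid R)"
  proof (rule subgroup.intro)
    fix x assume "x \<in> S"
    moreover have "x \<in> carrier R" using \<open>x \<in> S\<close> assms(1) by blast
    then have "inv\<^bsub>add_monoid R\<^esub> x = (\<ominus> \<one>) \<otimes> x"
      by (simp add: a_inv_def[symmetric] l_minus)
    ultimately show "inv\<^bsub>add_monoid R\<^esub> x \<in> S" using assms(4) by simp
  qed (use assms in auto)
next
  fix a x assume "a \<in> S" "x \<in> carrier R"
  then show "x \<otimes> a \<in> S" using assms(4) by blast
  then show "a \<otimes> x \<in> S" using \<open>a \<in> S\<close> \<open>x \<in> carrier R\<close> assms(1) m_comm by auto
qed

lemma (in ring) ideal_prod_subsetI:
  assumes "ideal K R" "\<And>i j. i \<in> I \<Longrightarrow> j \<in> J \<Longrightarrow> i \<otimes> j \<in> K"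
  shows "I \<cdot> J \<subseteq> K"
proof
  fix s assume "s \<in> I \<cdot> J" then show "s \<in> K"
    by (induct s rule: ideal_prod.induct)
      (auto simp: assms(2) additive_subgroup.a_closed[OF ideal.axioms(1)[OF assms(1)]])
qed

lemma ideal_prod_mono:
  assumes "I \<subseteq> I'" "J \<subseteq> J'"
  shows "I \<cdot>\<^bsub>R\<^esub> J \<subseteq> I' \<cdot>\<^bsub>R\<^esub> J'"
proof
  fix s assume "s \<in> I \<cdot>\<^bsub>R\<^esub> J" then show "s \<in> I' \<cdot>\<^bsub>R\<^esub> J'"
    by (induct s rule: ideal_prod.induct) (use assms in \<open>auto intro: ideal_prod.intros\<close>)
qed

lemma (in cring) PIdl_ideal_prod:
  assumes "ideal J R" "c \<in> carrier R"
  shows "(PIdl c) \<cdot> J = {c \<otimes> x | x. x \<in> J}"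
proof
  interpret J: ideal J R by fact
  show "(PIdl c) \<cdot> J \<subseteq> {c \<otimes> x | x. x \<in> J}"
  proof
    fix s assume "s \<in> (PIdl c) \<cdot> J" then show "s \<in> {c \<otimes> x | x. x \<in> J}"
    proof (induct s rule: ideal_prod.induct)
      case (prod i j)
      then obtain r where r: "r \<in> carrier R" "i = r \<otimes> c" unfolding cgenideal_def by auto
      then have "i \<otimes> j = c \<otimes> (r \<otimes> j)" using assms(2) J.Icarr[OF prod(2)] by (simp add: m_ac)
      moreover have "r \<otimes> j \<in> J" using J.I_l_closed prod(2) r by simp
      ultimately show ?case by blast
    next
      case (sum s1 s2)
      then obtain x y where xy: "x \<in> J" "y \<in> J" "s1 = c \<otimes> x" "s2 = c \<otimes> y" by auto
      then have "s1 \<oplus> s2 = c \<otimes> (x \<oplus> y)" using assms(2) J.Icarr by (simp add: r_distr)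
      then show ?case using xy J.a_closed by blast
    qed
  qed
  show "{c \<otimes> x | x. x \<in> J} \<subseteq> (PIdl c) \<cdot> J"
    using ideal_prod.prod[of c "PIdl c" _ J R] cgenideal_self[OF assms(2)] by auto
qed

lemma (in cring) ideal_prod_PIdl:
  assumes "a \<in> carrier R" "b \<in> carrier R"
  shows "(PIdl a) \<cdot> (PIdl b) = PIdl (a \<otimes> b)"
proof -
  have "(PIdl a) \<cdot> (PIdl b) = Idl (PIdl (a \<otimes> b))"
    using ideal_prod_eq_genideal[OF cgenideal_ideal[OF assms(1)] cgenideal_ideal[OF assms(2)]]
    by (simp add: cgenideal_prod assms)
  also have "\<dots> = PIdl (a \<otimes> b)"
  proof (rule subset_antisym)
    have "ideal (PIdl (a \<otimes> b)) R"
      using assms by (simp add: cgenideal_ideal)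
    then show "Idl (PIdl (a \<otimes> b)) \<subseteq> PIdl (a \<otimes> b)"
      by (rule genideal_minimal) simp
    show "PIdl (a \<otimes> b) \<subseteq> Idl (PIdl (a \<otimes> b))"
      by (rule genideal_self) (auto simp: cgenideal_def assms)
  qed
  finally show ?thesis .
qed

lemma (in ideal) I_add_cancel_left:
  assumes "x \<in> I" "y \<in> carrier R" "x \<oplus> y \<in> I"
  shows "y \<in> I"
proof -
  have "y = \<ominus> x \<oplus> (x \<oplus> y)"
    using assms Icarr by (simp add: a_assoc[symmetric] l_neg)
  then show ?thesis
    using assms additive_subgroup.a_closed[OF additive_subgroup_axioms]
      additive_subgroup.a_inv_closed[OF additive_subgroup_axioms] by metis
qed

lemma (in cring) set_add_PIdl:
  assumes "ideal J R" "a \<in> carrier R"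
  shows set_add_PIdl_ideal: "ideal (J <+>\<^bsub>R\<^esub> PIdl a) R"
    and set_add_PIdl_upper: "J \<subseteq> J <+>\<^bsub>R\<^esub> PIdl a"
    and set_add_PIdl_gen: "a \<in> J <+>\<^bsub>R\<^esub> PIdl a"
    and set_add_PIdlE: "u \<in> J <+>\<^bsub>R\<^esub> PIdl a \<Longrightarrow> \<exists>q\<in>J. \<exists>r\<in>carrier R. u = q \<oplus> r \<otimes> a"
proof -
  interpret ideal J R by fact
  show "ideal (J <+>\<^bsub>R\<^esub> PIdl a) R"
    by (rule add_ideals[OF assms(1) cgenideal_ideal[OF assms(2)]])
  show "J \<subseteq> J <+>\<^bsub>R\<^esub> PIdl a"
  proof
    fix q assume "q \<in> J"
    moreover have "q = q \<oplus> \<zero> \<otimes> a" "\<zero> \<otimes> a \<in> PIdl a"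
      using assms(2) Icarr[OF \<open>q \<in> J\<close>] unfolding cgenideal_def by (auto intro!: exI[of _ \<zero>])
    ultimately show "q \<in> J <+>\<^bsub>R\<^esub> PIdl a"
      unfolding set_add_def' by blast
  qed
  have "a = \<zero> \<oplus> \<one> \<otimes> a" "\<one> \<otimes> a \<in> PIdl a"
    using assms(2) unfolding cgenideal_def by (auto intro!: exI[of _ \<one>])
  then show "a \<in> J <+>\<^bsub>R\<^esub> PIdl a"
    unfolding set_add_def' using zero_closed by blast
  show "u \<in> J <+>\<^bsub>R\<^esub> PIdl a \<Longrightarrow> \<exists>q\<in>J. \<exists>r\<in>carrier R. u = q \<oplus> r \<otimes> a"
    unfolding set_add_def' cgenideal_def by blast
qed

lemma (in cring) not_primeideal_set_add_PIdl_prod: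
  assumes "ideal J R" "J \<noteq> carrier R" "\<not> primeideal J R"
  shows "\<exists>a\<in>carrier R. \<exists>b\<in>carrier R. a \<notin> J \<and> b \<notin> J \<and>
           (J <+>\<^bsub>R\<^esub> PIdl a) \<cdot> (J <+>\<^bsub>R\<^esub> PIdl b) \<subseteq> J"
proof -
  interpret J: ideal J R by fact
  obtain a b where ab: "a \<in> carrier R" "b \<in> carrier R" "a \<otimes> b \<in> J" "a \<notin> J" "b \<notin> J"
    using J.primeidealCD[OF is_cring] assms(2,3) by blast
  have "u \<otimes> v \<in> J" if u: "u \<in> J <+>\<^bsub>R\<^esub> PIdl a" and v: "v \<in> J <+>\<^bsub>R\<^esub> PIdl b" for u v
  proof -
    obtain p r where p: "p \<in> J" "r \<in> carrier R" "u = p \<oplus> r \<otimes> a"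
      using set_add_PIdlE[OF assms(1) ab(1) u] by blast
    obtain q s where q: "q \<in> J" "s \<in> carrier R" "v = q \<oplus> s \<otimes> b"
      using set_add_PIdlE[OF assms(1) ab(2) v] by blast
    have "p \<in> carrier R" "q \<in> carrier R" using p q J.Icarr by auto
    then have "u \<otimes> v = p \<otimes> v \<oplus> (r \<otimes> a) \<otimes> q \<oplus> (r \<otimes> s) \<otimes> (a \<otimes> b)"
      using p q ab(1,2) by (simp add: l_distr r_distr m_ac a_ac)
    moreover have "p \<otimes> v \<in> J" "(r \<otimes> a) \<otimes> q \<in> J" "(r \<otimes> s) \<otimes> (a \<otimes> b) \<in> J"
      using p q ab by (auto intro: J.I_r_closed J.I_l_closed)
    ultimately show ?thesis
      by (simp add: J.a_closed)
  qed
  then have "(J <+>\<^bsub>R\<^esub> PIdl a) \<cdot> (J <+>\<^bsub>R\<^esub> PIdl b) \<subseteq> J"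
    by (rule ideal_prod_subsetI[OF assms(1)])
  then show ?thesis using ab by blast
qed

lemma (in cring) primeideal_if_enlargements_have:
  assumes "ideal J R" "J \<noteq> carrier R" "\<not> P J"
    and enlarge: "\<And>x. x \<in> carrier R \<Longrightarrow> x \<notin> J \<Longrightarrow> P (J <+>\<^bsub>R\<^esub> PIdl x)"
    and mult: "\<And>K L. ideal K R \<Longrightarrow> ideal L R \<Longrightarrow> P K \<Longrightarrow> P L \<Longrightarrow> P (K \<cdot> L)"
    and mono: "\<And>K L. ideal L R \<Longrightarrow> P K \<Longrightarrow> K \<subseteq> L \<Longrightarrow> P L"
  shows "primeideal J R"
proof (rule ccontr)
  assume "\<not> primeideal J R"
  then obtain a b where ab: "a \<in> carrier R" "b \<in> carrier R" "a \<notin> J" "b \<notin> J"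
    and prod: "(J <+>\<^bsub>R\<^esub> PIdl a) \<cdot> (J <+>\<^bsub>R\<^esub> PIdl b) \<subseteq> J"
    using not_primeideal_set_add_PIdl_prod[OF assms(1,2)] by blast
  have "P ((J <+>\<^bsub>R\<^esub> PIdl a) \<cdot> (J <+>\<^bsub>R\<^esub> PIdl b))"
    using mult set_add_PIdl_ideal[OF assms(1)] enlarge ab by blast
  then show False
    using mono[OF assms(1) _ prod] assms(3) by blast
qed

primrec ideal_listprod :: "('a, 'b) ring_scheme \<Rightarrow> 'a set list \<Rightarrow> 'a set" where
  "ideal_listprod R [] = carrier R"
| "ideal_listprod R (P # Ps) = P \<cdot>\<^bsub>R\<^esub> ideal_listprod R Ps"

context cring begin

lemma ideal_listprod_ideal: "(\<And>P. P \<in> set Ps \<Longrightarrow> ideal P R) \<Longrightarrow> ideal (ideal_listprod R Ps) R"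
  by (induction Ps) (auto simp: oneideal ideal_prod_is_ideal)

lemma ideal_listprod_append:
  assumes "\<And>P. P \<in> set Ps \<Longrightarrow> ideal P R" "\<And>P. P \<in> set Qs \<Longrightarrow> ideal P R"
  shows "ideal_listprod R (Ps @ Qs) = ideal_listprod R Ps \<cdot> ideal_listprod R Qs"
  using assms(1)
proof (induction Ps)
  case Nil
  show ?case
    using ideal_prod_commute[OF oneideal ideal_listprod_ideal[OF assms(2)]]
      ideal_prod_one[OF ideal_listprod_ideal[OF assms(2)]] by simp
next
  case (Cons P Ps)
  then show ?case
    using ideal_prod_assoc[of P "ideal_listprod R Ps" "ideal_listprod R Qs"]
      ideal_listprod_ideal assms(2) by simp
qed

lemma ideal_listprod_remove1:
  assumes "P \<in> set Ps" "\<And>Q. Q \<in> set Ps \<Longrightarrow> ideal Q R"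
  shows "ideal_listprod R Ps = P \<cdot> ideal_listprod R (remove1 P Ps)"
  using assms
proof (induction Ps)
  case (Cons Q Qs)
  show ?case
  proof (cases "Q = P")
    case False
    then have P: "P \<in> set Qs" using Cons.prems(1) by simp
    have ideals: "ideal Q R" "ideal P R" "ideal (ideal_listprod R (remove1 P Qs)) R"
      using Cons.prems P by (auto intro!: ideal_listprod_ideal dest: notin_set_remove1)
    have "ideal_listprod R (Q # Qs) = Q \<cdot> (P \<cdot> ideal_listprod R (remove1 P Qs))"
      using Cons.IH[OF P] Cons.prems(2) by simp
    also have "\<dots> = (Q \<cdot> P) \<cdot> ideal_listprod R (remove1 P Qs)"
      using ideal_prod_assoc[OF ideals] by simp
    also have "\<dots> = (P \<cdot> Q) \<cdot> ideal_listprod R (remove1 P Qs)"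
      using ideal_prod_commute[OF ideals(1,2)] by simp
    also have "\<dots> = P \<cdot> (Q \<cdot> ideal_listprod R (remove1 P Qs))"
      using ideal_prod_assoc[OF ideals(2,1,3)] by simp
    finally show ?thesis using False by simp
  qed simp
qed simp

lemma primeideal_ideal_listprod:
  assumes "primeideal P R" "\<And>Q. Q \<in> set Ps \<Longrightarrow> ideal Q R" "ideal_listprod R Ps \<subseteq> P"
  shows "\<exists>Q\<in>set Ps. Q \<subseteq> P"
  using assms(2,3)
proof (induction Ps)
  case Nil
  then show ?case
    using primeideal.I_notcarr[OF assms(1)] ideal.Icarr[OF primeideal.axioms(1)[OF assms(1)]] by auto
next
  case (Cons Q Qs)
  then have "Q \<subseteq> P \<or> ideal_listprod R Qs \<subseteq> P"
    using primeideal_divides_ideal_prod[OF assms(1)] ideal_listprod_ideal by simp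
  then show ?case using Cons by auto
qed

end

definition ideal_quotient :: "('a, 'b) ring_scheme \<Rightarrow> 'a set \<Rightarrow> 'a set \<Rightarrow> 'a set"
  where "ideal_quotient R K J = {x \<in> carrier R. \<forall>j\<in>J. x \<otimes>\<^bsub>R\<^esub> j \<in> K}"

context cring begin

lemma ideal_quotient_ideal:
  assumes "ideal K R" "J \<subseteq> carrier R"
  shows "ideal (ideal_quotient R K J) R"
proof (rule ideal_closedI)
  interpret K: ideal K R by fact
  show "ideal_quotient R K J \<subseteq> carrier R" "\<zero> \<in> ideal_quotient R K J"
    unfolding ideal_quotient_def using assms(2) by auto
  show "x \<oplus> y \<in> ideal_quotient R K J"
    if "x \<in> ideal_quotient R K J" "y \<in> ideal_quotient R K J" for x y
    using that assms(2) unfolding ideal_quotient_def by (auto simp: l_distr subset_iff)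
  show "r \<otimes> x \<in> ideal_quotient R K J"
    if "r \<in> carrier R" "x \<in> ideal_quotient R K J" for r x
    using that assms(2) K.I_l_closed unfolding ideal_quotient_def by (auto simp: m_assoc subset_iff)
qed

lemma ideal_quotient_upper:
  assumes "ideal K R" "J \<subseteq> carrier R"
  shows "K \<subseteq> ideal_quotient R K J"
proof
  fix k assume "k \<in> K"
  then show "k \<in> ideal_quotient R K J"
    using ideal.Icarr[OF assms(1)] ideal.I_r_closed[OF assms(1)] assms(2)
    unfolding ideal_quotient_def by blast
qed

lemma ideal_prod_ideal_quotient:
  assumes "ideal K R" "J \<subseteq> carrier R"
  shows "J \<cdot> ideal_quotient R K J \<subseteq> K"
  by (rule ideal_prod_subsetI[OF assms(1)])
    (use assms(2) in \<open>auto simp: ideal_quotient_def m_comm subset_iff\<close>)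

lemma mem_ideal_quotient_PIdl:
  assumes "ideal K R" "c \<in> carrier R"
  shows "x \<in> ideal_quotient R K (PIdl c) \<longleftrightarrow> x \<in> carrier R \<and> c \<otimes> x \<in> K"
proof
  assume "x \<in> ideal_quotient R K (PIdl c)"
  then show "x \<in> carrier R \<and> c \<otimes> x \<in> K"
    using cgenideal_self[OF assms(2)] assms(2) unfolding ideal_quotient_def by (auto simp: m_comm)
next
  assume x: "x \<in> carrier R \<and> c \<otimes> x \<in> K"
  have "x \<otimes> (r \<otimes> c) = r \<otimes> (c \<otimes> x)" if "r \<in> carrier R" for r
    using that x assms(2) by (simp add: m_ac)
  then show "x \<in> ideal_quotient R K (PIdl c)"
    using x ideal.I_l_closed[OF assms(1)] unfolding ideal_quotient_def cgenideal_def by auto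
qed

lemma subset_ideal_quotient_prod_PIdl:
  assumes "ideal J R" "ideal Q R" "c \<in> Q"
  shows "J \<subseteq> ideal_quotient R (J \<cdot> Q) (PIdl c)"
proof
  fix p assume "p \<in> J"
  have "c \<in> carrier R" "p \<in> carrier R"
    using ideal.Icarr[OF assms(2) assms(3)] ideal.Icarr[OF assms(1) \<open>p \<in> J\<close>] by auto
  moreover have "c \<otimes> p \<in> J \<cdot> Q"
    using ideal_prod.prod[of p J c Q R] \<open>p \<in> J\<close> assms(3) m_comm calculation by simp
  ultimately show "p \<in> ideal_quotient R (J \<cdot> Q) (PIdl c)"
    using mem_ideal_quotient_PIdl[OF ideal_prod_is_ideal[OF assms(1,2)]] by blast
qed

lemma PIdl_ideal_prod_ideal_quotient:
  assumes "ideal K R" "c \<in> carrier R" "K \<subseteq> PIdl c"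
  shows "K = (PIdl c) \<cdot> ideal_quotient R K (PIdl c)"
proof -
  have "K = {c \<otimes> x | x. x \<in> ideal_quotient R K (PIdl c)}"
  proof
    show "K \<subseteq> {c \<otimes> x | x. x \<in> ideal_quotient R K (PIdl c)}"
    proof
      fix y assume "y \<in> K"
      then obtain x where "x \<in> carrier R" "y = c \<otimes> x"
        using assms(2,3) m_comm unfolding cgenideal_def by blast
      then show "y \<in> {c \<otimes> x | x. x \<in> ideal_quotient R K (PIdl c)}"
        using \<open>y \<in> K\<close> mem_ideal_quotient_PIdl[OF assms(1,2)] by blast
    qed
    show "{c \<otimes> x | x. x \<in> ideal_quotient R K (PIdl c)} \<subseteq> K"
      using mem_ideal_quotient_PIdl[OF assms(1,2)] by blast
  qed
  also have "\<dots> = (PIdl c) \<cdot> ideal_quotient R K (PIdl c)"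
    using PIdl_ideal_prod[OF ideal_quotient_ideal[OF assms(1)] assms(2)]
      ideal.Icarr[OF cgenideal_ideal[OF assms(2)]] by blast
  finally show ?thesis .
qed

end

text \<open>In a domain, \<open>I Q = (c)\<close> with \<open>c \<noteq> 0\<close> says that \<open>I\<close> is invertible as a fractional ideal,
  with inverse \<open>c\<^sup>-\<^sup>1 Q\<close>.\<close>

definition invertible_ideal :: "('a, 'b) ring_scheme \<Rightarrow> 'a set \<Rightarrow> bool"
  where "invertible_ideal R I \<longleftrightarrow>
    (\<exists>c Q. c \<in> carrier R \<and> c \<noteq> \<zero>\<^bsub>R\<^esub> \<and> ideal Q R \<and> I \<cdot>\<^bsub>R\<^esub> Q = PIdl\<^bsub>R\<^esub> c)"

section \<open>Cocycles on ideals\<close>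

lemma Hom_idealD:
  assumes "\<phi> \<in> Hom_ideal R I M"
  shows Hom_ideal_closed: "t \<in> I \<Longrightarrow> \<phi> t \<in> carrier M"
    and Hom_ideal_smult: "r \<in> carrier R \<Longrightarrow> t \<in> I \<Longrightarrow> \<phi> (r \<otimes>\<^bsub>R\<^esub> t) = r \<odot>\<^bsub>M\<^esub> \<phi> t"
  using assms unfolding Hom_ideal_def by auto

lemma Z_R_Hom_ideal: "\<phi> \<in> Z_R R I M \<Longrightarrow> \<phi> \<in> Hom_ideal R I M"
  unfolding Z_R_def by simp

lemma Z_R_local: "\<phi> \<in> Z_R R I M \<Longrightarrow> t \<in> I \<Longrightarrow> \<exists>m\<in>carrier M. \<phi> t = t \<odot>\<^bsub>M\<^esub> m"
  unfolding Z_R_def by simp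

lemma H_R_zeroI:
  assumes "\<And>\<phi>. \<phi> \<in> Z_R R I M \<Longrightarrow> \<exists>m\<in>carrier M. \<forall>t\<in>I. \<phi> t = t \<odot>\<^bsub>M\<^esub> m"
  shows "H_R_zero R I M"
  using assms unfolding H_R_zero_def B_R_def by auto

lemma self_module_simps [simp]:
  "carrier (self_module R) = carrier R"
  "x \<odot>\<^bsub>self_module R\<^esub> y = x \<otimes>\<^bsub>R\<^esub> y"
  by (simp_all add: self_module_def ring.defs)

lemma (in cring) Hom_ideal_swap:
  assumes "\<phi> \<in> Hom_ideal R I M" "ideal I R" "a \<in> I" "t \<in> I"
  shows "a \<odot>\<^bsub>M\<^esub> \<phi> t = t \<odot>\<^bsub>M\<^esub> \<phi> a"
proof -
  have "a \<in> carrier R" "t \<in> carrier R"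
    using ideal.Icarr[OF assms(2)] assms(3,4) by auto
  then have "a \<otimes> t = t \<otimes> a"
    by (rule m_comm)
  then show ?thesis
    using Hom_ideal_smult[OF assms(1)] \<open>a \<in> carrier R\<close> \<open>t \<in> carrier R\<close> assms(3,4) by metis
qed

definition class_annihilator ::
    "('a, 'c) ring_scheme \<Rightarrow> 'a set \<Rightarrow> ('a, 'b, 'd) module_scheme \<Rightarrow> ('a \<Rightarrow> 'b) \<Rightarrow> 'a set"
  where "class_annihilator R I M \<phi> =
    {g \<in> carrier R. \<exists>m\<in>carrier M. \<forall>t\<in>I. g \<odot>\<^bsub>M\<^esub> \<phi> t = t \<odot>\<^bsub>M\<^esub> m}"

context module begin

lemma H_R_zero_if_one_mem_class_annihilator:
  assumes "\<And>\<phi>. \<phi> \<in> Z_R R I M \<Longrightarrow> \<one> \<in> class_annihilator R I M \<phi>"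
  shows "H_R_zero R I M"
proof (rule H_R_zeroI)
  fix \<phi> assume "\<phi> \<in> Z_R R I M"
  then show "\<exists>m\<in>carrier M. \<forall>t\<in>I. \<phi> t = t \<odot>\<^bsub>M\<^esub> m"
    using assms Hom_ideal_closed[OF Z_R_Hom_ideal] unfolding class_annihilator_def by fastforce
qed

lemma class_annihilator_ideal:
  assumes "\<phi> \<in> Hom_ideal R I M" "ideal I R"
  shows "ideal (class_annihilator R I M \<phi>) R"
proof (rule ideal_closedI)
  show "class_annihilator R I M \<phi> \<subseteq> carrier R"
    unfolding class_annihilator_def by blast
  show "\<zero> \<in> class_annihilator R I M \<phi>"
    unfolding class_annihilator_def using Hom_ideal_closed[OF assms(1)] ideal.Icarr[OF assms(2)]
    by (auto intro!: bexI[of _ "\<zero>\<^bsub>M\<^esub>"])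
next
  fix g h assume "g \<in> class_annihilator R I M \<phi>" "h \<in> class_annihilator R I M \<phi>"
  then obtain m n where "g \<in> carrier R" "m \<in> carrier M" "\<forall>t\<in>I. g \<odot>\<^bsub>M\<^esub> \<phi> t = t \<odot>\<^bsub>M\<^esub> m"
    "h \<in> carrier R" "n \<in> carrier M" "\<forall>t\<in>I. h \<odot>\<^bsub>M\<^esub> \<phi> t = t \<odot>\<^bsub>M\<^esub> n"
    unfolding class_annihilator_def by blast
  then show "g \<oplus> h \<in> class_annihilator R I M \<phi>"
    unfolding class_annihilator_def using Hom_ideal_closed[OF assms(1)] ideal.Icarr[OF assms(2)]
    by (auto simp: smult_l_distr smult_r_distr intro!: bexI[of _ "m \<oplus>\<^bsub>M\<^esub> n"])
next
  fix r g assume "r \<in> carrier R" "g \<in> class_annihilator R I M \<phi>"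
  then obtain m where g: "g \<in> carrier R" "m \<in> carrier M" "\<forall>t\<in>I. g \<odot>\<^bsub>M\<^esub> \<phi> t = t \<odot>\<^bsub>M\<^esub> m"
    unfolding class_annihilator_def by blast
  have "(r \<otimes> g) \<odot>\<^bsub>M\<^esub> \<phi> t = t \<odot>\<^bsub>M\<^esub> (r \<odot>\<^bsub>M\<^esub> m)" if "t \<in> I" for t
  proof -
    have "t \<in> carrier R" "\<phi> t \<in> carrier M"
      using ideal.Icarr[OF assms(2) that] Hom_ideal_closed[OF assms(1) that] .
    then have "(r \<otimes> g) \<odot>\<^bsub>M\<^esub> \<phi> t = (r \<otimes> t) \<odot>\<^bsub>M\<^esub> m"
      using g that \<open>r \<in> carrier R\<close> by (simp add: smult_assoc1)
    also have "\<dots> = t \<odot>\<^bsub>M\<^esub> (r \<odot>\<^bsub>M\<^esub> m)"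
      using g(2) \<open>r \<in> carrier R\<close> \<open>t \<in> carrier R\<close> by (simp add: m_comm smult_assoc1[symmetric])
    finally show ?thesis .
  qed
  then show "r \<otimes> g \<in> class_annihilator R I M \<phi>"
    unfolding class_annihilator_def using \<open>r \<in> carrier R\<close> g(1,2) by blast
qed

lemma mem_class_annihilatorI:
  assumes "\<phi> \<in> Z_R R I M" "ideal I R" "t0 \<in> I" "g \<in> carrier R"
    and "\<And>t. t \<in> I \<Longrightarrow> g \<otimes> t \<in> PIdl t0"
  shows "g \<in> class_annihilator R I M \<phi>"
proof -
  note \<phi> = Z_R_Hom_ideal[OF assms(1)]
  obtain m where m: "m \<in> carrier M" "\<phi> t0 = t0 \<odot>\<^bsub>M\<^esub> m"
    using Z_R_local[OF assms(1,3)] by blast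
  have "t0 \<in> carrier R" using ideal.Icarr[OF assms(2,3)] .
  have "g \<odot>\<^bsub>M\<^esub> \<phi> t = t \<odot>\<^bsub>M\<^esub> (g \<odot>\<^bsub>M\<^esub> m)" if t: "t \<in> I" for t
  proof -
    have "t \<in> carrier R" using ideal.Icarr[OF assms(2) t] .
    obtain q where q: "q \<in> carrier R" "g \<otimes> t = q \<otimes> t0"
      using assms(5)[OF t] unfolding cgenideal_def by blast
    have "g \<odot>\<^bsub>M\<^esub> \<phi> t = \<phi> (q \<otimes> t0)"
      using Hom_ideal_smult[OF \<phi> assms(4) t] q(2) by simp
    also have "\<dots> = (q \<otimes> t0) \<odot>\<^bsub>M\<^esub> m"
      using Hom_ideal_smult[OF \<phi> q(1) assms(3)] m q(1) \<open>t0 \<in> carrier R\<close> by (simp add: smult_assoc1)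
    also have "\<dots> = (t \<otimes> g) \<odot>\<^bsub>M\<^esub> m"
      using q(2) m_comm[OF assms(4) \<open>t \<in> carrier R\<close>] by simp
    also have "\<dots> = t \<odot>\<^bsub>M\<^esub> (g \<odot>\<^bsub>M\<^esub> m)"
      using m(1) assms(4) \<open>t \<in> carrier R\<close> by (simp add: smult_assoc1)
    finally show ?thesis .
  qed
  then show ?thesis
    unfolding class_annihilator_def using assms(4) m(1) by blast
qed

lemma H_R_zero_principal:
  assumes "principalideal I R"
  shows "H_R_zero R I M"
proof (rule H_R_zero_if_one_mem_class_annihilator)
  fix \<phi> assume "\<phi> \<in> Z_R R I M"
  obtain a where a: "a \<in> carrier R" "I = PIdl a"
    using principalideal.generate[OF assms] cgenideal_eq_genideal by auto
  show "\<one> \<in> class_annihilator R I M \<phi>"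
  proof (rule mem_class_annihilatorI[OF \<open>\<phi> \<in> Z_R R I M\<close>])
    show "ideal I R" "a \<in> I" using a cgenideal_ideal cgenideal_self by auto
    show "\<one> \<otimes> t \<in> PIdl a" if "t \<in> I" for t
      using that a ideal.Icarr[OF cgenideal_ideal[OF a(1)]] by simp
  qed simp
qed

lemma torsion_free_smult_cancel:
  assumes "torsion_free R M" "a \<in> carrier R" "a \<noteq> \<zero>" "x \<in> carrier M" "y \<in> carrier M"
    and "a \<odot>\<^bsub>M\<^esub> x = a \<odot>\<^bsub>M\<^esub> y"
  shows "x = y"
proof -
  have "a \<odot>\<^bsub>M\<^esub> (x \<ominus>\<^bsub>M\<^esub> y) = \<zero>\<^bsub>M\<^esub>"
    using assms(2,4-6) by (simp add: M.minus_eq smult_r_distr smult_r_minus M.r_neg)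
  then have "x \<ominus>\<^bsub>M\<^esub> y = \<zero>\<^bsub>M\<^esub>"
    using assms(1-5) unfolding torsion_free_def by blast
  then show ?thesis using assms(4,5) by (simp add: M.add.inv_solve_right' M.minus_eq)
qed

lemma H_R_zero_torsion_free:
  assumes "ideal I R" "torsion_free R M"
  shows "H_R_zero R I M"
proof (cases "I = {\<zero>}")
  case True
  then show ?thesis using H_R_zero_principal zeropideal by simp
next
  case False
  then obtain a where a: "a \<in> I" "a \<noteq> \<zero>"
    using additive_subgroup.zero_closed[OF ideal.axioms(1)[OF assms(1)]] by blast
  have "a \<in> carrier R" using ideal.Icarr[OF assms(1) a(1)] .
  show ?thesis
  proof (rule H_R_zeroI)
    fix \<phi> assume \<phi>: "\<phi> \<in> Z_R R I M"
    obtain m where m: "m \<in> carrier M" "\<phi> a = a \<odot>\<^bsub>M\<^esub> m"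
      using Z_R_local[OF \<phi> a(1)] by blast
    have "\<phi> t = t \<odot>\<^bsub>M\<^esub> m" if t: "t \<in> I" for t
    proof (rule torsion_free_smult_cancel[OF assms(2) \<open>a \<in> carrier R\<close> a(2)])
      have "t \<in> carrier R" using ideal.Icarr[OF assms(1) t] .
      then show "a \<odot>\<^bsub>M\<^esub> \<phi> t = a \<odot>\<^bsub>M\<^esub> (t \<odot>\<^bsub>M\<^esub> m)"
        using Hom_ideal_swap[OF Z_R_Hom_ideal[OF \<phi>] assms(1) a(1) t] m \<open>a \<in> carrier R\<close>
        by (simp add: smult_assoc1[symmetric] m_comm)
      show "\<phi> t \<in> carrier M" "t \<odot>\<^bsub>M\<^esub> m \<in> carrier M"
        using Hom_ideal_closed[OF Z_R_Hom_ideal[OF \<phi>] t] \<open>t \<in> carrier R\<close> m(1) by auto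
    qed
    then show "\<exists>m\<in>carrier M. \<forall>t\<in>I. \<phi> t = t \<odot>\<^bsub>M\<^esub> m" using m(1) by blast
  qed
qed

lemma mem_class_annihilator_invertible:
  assumes "domain R" "\<phi> \<in> Z_R R I M" "ideal I R" "ideal Q R"
    and "c \<in> carrier R" "c \<noteq> \<zero>" "I \<cdot> Q = PIdl c"
    and "t0 \<in> I" "q \<in> Q" "g \<in> carrier R" "t0 \<otimes> q = c \<otimes> g"
  shows "g \<in> class_annihilator R I M \<phi>"
proof (rule mem_class_annihilatorI[OF assms(2,3,8,10)])
  interpret domain R by fact
  fix t assume "t \<in> I"
  have "t \<in> carrier R" "t0 \<in> carrier R" "q \<in> carrier R"
    using ideal.Icarr[OF assms(3)] ideal.Icarr[OF assms(4)] \<open>t \<in> I\<close> assms(8,9) by auto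
  have "t \<otimes> q \<in> PIdl c"
    using ideal_prod.prod[of t I q Q R] \<open>t \<in> I\<close> assms(7,9) by simp
  then obtain s where s: "s \<in> carrier R" "t \<otimes> q = s \<otimes> c"
    unfolding cgenideal_def by blast
  have "c \<otimes> (g \<otimes> t) = (t0 \<otimes> q) \<otimes> t"
    using assms(5,10,11) \<open>t \<in> carrier R\<close> by (simp add: m_assoc)
  also have "\<dots> = t0 \<otimes> (t \<otimes> q)"
    using \<open>t \<in> carrier R\<close> \<open>t0 \<in> carrier R\<close> \<open>q \<in> carrier R\<close> by (simp add: m_ac)
  also have "\<dots> = c \<otimes> (s \<otimes> t0)"
    using s assms(5) \<open>t0 \<in> carrier R\<close> by (simp add: m_ac)
  finally have "g \<otimes> t = s \<otimes> t0"
    using m_lcancel[OF assms(6,5)] assms(10) s(1) \<open>t \<in> carrier R\<close> \<open>t0 \<in> carrier R\<close> by simp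
  then show "g \<otimes> t \<in> PIdl t0"
    unfolding cgenideal_def using s(1) by blast
qed

lemma H_R_zero_invertible:
  assumes "domain R" "ideal I R" "invertible_ideal R I"
  shows "H_R_zero R I M"
proof (rule H_R_zero_if_one_mem_class_annihilator)
  interpret domain R by fact
  fix \<phi> assume \<phi>: "\<phi> \<in> Z_R R I M"
  define G where "G = class_annihilator R I M \<phi>"
  have G: "ideal G R"
    unfolding G_def by (rule class_annihilator_ideal[OF Z_R_Hom_ideal[OF \<phi>] assms(2)])
  obtain c Q where c: "c \<in> carrier R" "c \<noteq> \<zero>" and Q: "ideal Q R" and IQ: "I \<cdot> Q = PIdl c"
    using assms(3) unfolding invertible_ideal_def by blast
  have "t0 \<otimes> q \<in> (PIdl c) \<cdot> G" if "t0 \<in> I" "q \<in> Q" for t0 q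
  proof -
    have "t0 \<otimes> q \<in> PIdl c"
      using ideal_prod.prod[of t0 I q Q R] that IQ by simp
    then obtain g where g: "g \<in> carrier R" "t0 \<otimes> q = c \<otimes> g"
      using m_comm[OF _ c(1)] unfolding cgenideal_def by auto
    then have "g \<in> G"
      unfolding G_def using mem_class_annihilator_invertible[OF assms(1) \<phi> assms(2) Q c IQ that] by blast
    then show ?thesis
      using g(2) PIdl_ideal_prod[OF G c(1)] by blast
  qed
  then have "I \<cdot> Q \<subseteq> (PIdl c) \<cdot> G"
    by (rule ideal_prod_subsetI[OF ideal_prod_is_ideal[OF cgenideal_ideal[OF c(1)] G]])
  then obtain g where "g \<in> G" "c = c \<otimes> g"
    using IQ PIdl_ideal_prod[OF G c(1)] cgenideal_self[OF c(1)] by blast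
  then show "\<one> \<in> class_annihilator R I M \<phi>"
    using m_lcancel[OF c(2,1) one_closed, of g] c(1) G ideal.Icarr unfolding G_def by fastforce
qed

end

section \<open>Reduced rings with finitely many minimal primes\<close>

lemma (in cring) ex_primeideal_not_mem:
  assumes "d \<in> carrier R" "\<And>n::nat. d [^] n \<noteq> \<zero>"
  shows "\<exists>Q. primeideal Q R \<and> d \<notin> Q"
proof -
  define A where "A = {J. ideal J R \<and> (\<forall>n::nat. d [^] n \<notin> J)}"
  have "\<exists>Q\<in>A. \<forall>J\<in>A. Q \<subseteq> J \<longrightarrow> J = Q"
  proof (rule subset_Zorn_nonempty)
    show "A \<noteq> {}"
      unfolding A_def using zeroideal assms(2) by auto
    show "\<Union>C \<in> A" if C: "C \<noteq> {}" "subset.chain A C" for C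
    proof -
      have "subset.chain {I. ideal I R} C"
        using C(2) unfolding A_def subset_chain_def by auto
      from chain_Union_is_ideal[OF this] have "ideal (\<Union>C) R"
        using C(1) by simp
      moreover have "\<forall>n::nat. d [^] n \<notin> \<Union>C"
        using C(2) unfolding A_def subset_chain_def by auto
      ultimately show ?thesis unfolding A_def by simp
    qed
  qed
  then obtain Q where "Q \<in> A" and Q_max: "\<And>J. J \<in> A \<Longrightarrow> Q \<subseteq> J \<Longrightarrow> J = Q"
    by blast
  then have Q: "ideal Q R" "\<And>n::nat. d [^] n \<notin> Q"
    unfolding A_def by auto
  have "primeideal Q R"
  proof (rule primeideal_if_enlargements_have[OF Q(1), where P = "\<lambda>K. \<exists>n::nat. d [^] n \<in> K"])
    show "Q \<noteq> carrier R" using Q(2)[of 0] by auto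
    show "\<exists>n::nat. d [^] n \<in> Q <+>\<^bsub>R\<^esub> PIdl x" if "x \<in> carrier R" "x \<notin> Q" for x
      using Q_max[of "Q <+>\<^bsub>R\<^esub> PIdl x"] set_add_PIdl[OF Q(1) that(1)] that(2)
      unfolding A_def by blast
    show "\<exists>n::nat. d [^] n \<in> K \<cdot> L"
      if K: "\<exists>n::nat. d [^] n \<in> K" and L: "\<exists>n::nat. d [^] n \<in> L" for K L
    proof -
      obtain i j :: nat where "d [^] i \<in> K" "d [^] j \<in> L" using K L by blast
      then have "d [^] i \<otimes> d [^] j \<in> K \<cdot> L" by (rule ideal_prod.prod)
      then show ?thesis using assms(1) by (auto simp: nat_pow_mult)
    qed
  qed (use Q(2) in auto)
  moreover have "d \<notin> Q"
    using Q(2)[of 1] assms(1) by simp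
  ultimately show ?thesis by blast
qed

lemma (in cring) primeideal_Inter_chain:
  assumes "C \<noteq> {}" "subset.chain {P. primeideal P R} C"
  shows "primeideal (\<Inter>C) R"
proof -
  have prime: "\<And>P. P \<in> C \<Longrightarrow> primeideal P R"
    using assms(2) unfolding pred_on.chain_def by blast
  show ?thesis
  proof (rule primeidealI[OF i_Intersect is_cring])
    show "\<And>P. P \<in> C \<Longrightarrow> ideal P R" using prime primeideal.axioms(1) by blast
    show "C \<noteq> {}" by fact
    obtain P where P: "P \<in> C" using assms(1) by blast
    have "carrier R \<noteq> P" "P \<subseteq> carrier R"
      using primeideal.I_notcarr[OF prime[OF P]] ideal.Icarr[OF primeideal.axioms(1)[OF prime[OF P]]]
      by auto
    then show "carrier R \<noteq> \<Inter>C"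
      using P by blast
    fix a b assume ab: "a \<in> carrier R" "b \<in> carrier R" "a \<otimes> b \<in> \<Inter>C"
    show "a \<in> \<Inter>C \<or> b \<in> \<Inter>C"
    proof (rule ccontr)
      assume "\<not> (a \<in> \<Inter>C \<or> b \<in> \<Inter>C)"
      then obtain P Q where PQ: "P \<in> C" "a \<notin> P" "Q \<in> C" "b \<notin> Q" by auto
      then have "b \<in> P" "a \<in> Q"
        using ab primeideal.I_prime[OF prime[OF PQ(1)] ab(1,2)]
          primeideal.I_prime[OF prime[OF PQ(3)] ab(1,2)] by auto
      then show False
        using assms(2) PQ unfolding pred_on.chain_def by blast
    qed
  qed
qed

lemma (in cring) primeideal_contains_minimal_prime:
  assumes "primeideal Q R"
  shows "\<exists>P. minimal_prime P R \<and> P \<subseteq> Q"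
proof -
  define A where "A = {P. primeideal P R \<and> P \<subseteq> Q}"
  have order: "partial_order_on A (relation_of (\<lambda>S T. T \<subseteq> S) A)"
    by (rule partial_order_on_relation_ofI) auto
  have chains: "\<exists>U\<in>A. \<forall>P\<in>C. U \<subseteq> P"
    if C: "C \<in> Chains (relation_of (\<lambda>S T. T \<subseteq> S) A)" for C
  proof (cases "C = {}")
    case True
    then show ?thesis using assms unfolding A_def by blast
  next
    case False
    have "C \<subseteq> A" by (rule Chains_relation_of[OF C])
    moreover have "\<forall>S\<in>C. \<forall>T\<in>C. S \<subseteq> T \<or> T \<subseteq> S"
      using C unfolding Chains_def relation_of_def by fast
    ultimately have "subset.chain {P. primeideal P R} C"
      unfolding subset_chain_def A_def by blast
    then have "primeideal (\<Inter>C) R"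
      by (rule primeideal_Inter_chain[OF False])
    moreover have "\<Inter>C \<subseteq> Q"
      using \<open>C \<subseteq> A\<close> False unfolding A_def by blast
    ultimately show ?thesis unfolding A_def by blast
  qed
  obtain P where "P \<in> A" and "\<forall>P'\<in>A. P' \<subseteq> P \<longrightarrow> P' = P"
    using predicate_Zorn[OF order chains] by blast
  then show ?thesis
    unfolding minimal_prime_def A_def by blast
qed

lemma (in cring) reduced_ring_eq_zero_if_mem_minimal_primes:
  assumes "reduced_ring R" "d \<in> carrier R" "\<And>P. minimal_prime P R \<Longrightarrow> d \<in> P"
  shows "d = \<zero>"
proof (rule ccontr)
  assume "d \<noteq> \<zero>"
  then have "\<And>n::nat. d [^] n \<noteq> \<zero>"
    using assms(1,2) unfolding reduced_ring_def by blast
  then obtain Q where "primeideal Q R" "d \<notin> Q"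
    using ex_primeideal_not_mem assms(2) by blast
  then show False
    using primeideal_contains_minimal_prime assms(3) by blast
qed

lemma (in cring) Inter_not_subset_primeideal:
  assumes "finite G" "\<And>Q. Q \<in> G \<Longrightarrow> ideal Q R" "primeideal P R" "\<And>Q. Q \<in> G \<Longrightarrow> \<not> Q \<subseteq> P"
  shows "\<exists>y\<in>carrier R. y \<notin> P \<and> (\<forall>Q\<in>G. y \<in> Q)"
  using assms(1,2,4)
proof (induction G rule: finite_induct)
  case empty
  have "\<one> \<notin> P"
    using ideal.one_imp_carrier[OF primeideal.axioms(1)[OF assms(3)]] primeideal.I_notcarr[OF assms(3)]
    by blast
  then show ?case by blast
next
  case (insert Q G)
  obtain y where y: "y \<in> carrier R" "y \<notin> P" "\<forall>Q'\<in>G. y \<in> Q'"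
    using insert.IH insert.prems by blast
  obtain x where x: "x \<in> Q" "x \<notin> P"
    using insert.prems(2)[of Q] by blast
  have Q: "ideal Q R" using insert.prems(1) by blast
  have "x \<in> carrier R" using ideal.Icarr[OF Q x(1)] .
  have "x \<otimes> y \<notin> P"
    using primeideal.I_prime[OF assms(3) \<open>x \<in> carrier R\<close> y(1)] x(2) y(2) by blast
  moreover have "x \<otimes> y \<in> Q"
    using ideal.I_r_closed[OF Q x(1) y(1)] .
  moreover have "x \<otimes> y \<in> Q'" if "Q' \<in> G" for Q'
    using ideal.I_l_closed[OF insert.prems(1)[of Q'] _ \<open>x \<in> carrier R\<close>] y(3) that by blast
  ultimately show ?case
    using \<open>x \<in> carrier R\<close> y(1) by blast
qed

lemma (in cring) prime_avoidance_insert: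
  assumes "ideal I R" "finite F" "\<And>Q. Q \<in> F \<Longrightarrow> ideal Q R"
    and "primeideal P0 R" "\<And>Q. Q \<in> F \<Longrightarrow> \<not> Q \<subseteq> P0" "\<not> I \<subseteq> P0"
    and "a \<in> I" "\<forall>P\<in>F. a \<notin> P"
  shows "\<exists>a'\<in>I. \<forall>P\<in>insert P0 F. a' \<notin> P"
proof (cases "a \<in> P0")
  case False
  then show ?thesis using assms(7,8) by blast
next
  case True
  interpret I: ideal I R by fact
  obtain y where y: "y \<in> carrier R" "y \<notin> P0" "\<forall>Q\<in>F. y \<in> Q"
    using Inter_not_subset_primeideal[OF assms(2,3,4,5)] by blast
  obtain a0 where a0: "a0 \<in> I" "a0 \<notin> P0"
    using assms(6) by blast
  have "a \<in> carrier R" "a0 \<in> carrier R"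
    using assms(7) a0(1) I.Icarr by auto
  have "y \<otimes> a0 \<notin> P0"
    using primeideal.I_prime[OF assms(4) y(1) \<open>a0 \<in> carrier R\<close>] y(2) a0(2) by blast
  define a' where "a' = y \<otimes> a0 \<oplus> a"
  have "a' \<in> I"
    unfolding a'_def using I.I_l_closed[OF a0(1) y(1)] assms(7) by simp
  moreover have "a' \<notin> P0"
  proof
    assume "a' \<in> P0"
    then have "a \<oplus> y \<otimes> a0 \<in> P0"
      unfolding a'_def using y(1) \<open>a0 \<in> carrier R\<close> \<open>a \<in> carrier R\<close> by (simp add: a_comm)
    then show False
      using ideal.I_add_cancel_left[OF primeideal.axioms(1)[OF assms(4)] True] \<open>y \<otimes> a0 \<notin> P0\<close>
        y(1) \<open>a0 \<in> carrier R\<close> by simp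
  qed
  moreover have "a' \<notin> P" if "P \<in> F" for P
  proof
    assume "a' \<in> P"
    have "y \<otimes> a0 \<in> P"
      using ideal.I_r_closed[OF assms(3)[OF that]] y(3) \<open>a0 \<in> carrier R\<close> that by blast
    then have "a \<in> P"
      using ideal.I_add_cancel_left[OF assms(3)[OF that]] \<open>a' \<in> P\<close> \<open>a \<in> carrier R\<close>
      unfolding a'_def by blast
    then show False using assms(8) that by blast
  qed
  ultimately show ?thesis by blast
qed

lemma (in cring) prime_avoidance:
  assumes "ideal I R" "finite F"
    and "\<And>P. P \<in> F \<Longrightarrow> primeideal P R"
    and "\<And>P Q. P \<in> F \<Longrightarrow> Q \<in> F \<Longrightarrow> P \<subseteq> Q \<Longrightarrow> P = Q"
    and "\<And>P. P \<in> F \<Longrightarrow> \<not> I \<subseteq> P"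
  shows "\<exists>a\<in>I. \<forall>P\<in>F. a \<notin> P"
  using assms(2-5)
proof (induction F rule: finite_induct)
  case empty
  then show ?case using additive_subgroup.zero_closed[OF ideal.axioms(1)[OF assms(1)]] by blast
next
  case (insert P0 F)
  have "\<exists>a\<in>I. \<forall>P\<in>F. a \<notin> P"
  proof (rule insert.IH)
    show "primeideal P R" if "P \<in> F" for P by (rule insert.prems(1)) (use that in simp)
    show "P = Q" if "P \<in> F" "Q \<in> F" "P \<subseteq> Q" for P Q by (rule insert.prems(2)) (use that in simp_all)
    show "\<not> I \<subseteq> P" if "P \<in> F" for P by (rule insert.prems(3)) (use that in simp)
  qed
  then obtain a where "a \<in> I" "\<forall>P\<in>F. a \<notin> P" ..
  moreover have "\<not> Q \<subseteq> P0" if "Q \<in> F" for Q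
    using insert.prems(2)[of Q P0] insert.hyps(2) that by blast
  ultimately show ?case
    using prime_avoidance_insert[OF assms(1) insert.hyps(1) _ insert.prems(1) _ insert.prems(3)]
      insert.prems(1) primeideal.axioms(1) by blast
qed

lemma (in cring) reduced_ring_ex_regular_mem_ideal:
  assumes "reduced_ring R" "finite {P. minimal_prime P R}" "ideal I R"
  shows "\<exists>a\<in>I. \<forall>d\<in>I. a \<otimes> d = \<zero> \<longrightarrow> d = \<zero>"
proof -
  have "\<exists>a\<in>I. \<forall>P\<in>{P. minimal_prime P R \<and> \<not> I \<subseteq> P}. a \<notin> P"
  proof (rule prime_avoidance[OF assms(3)])
    show "finite {P. minimal_prime P R \<and> \<not> I \<subseteq> P}"
      using assms(2) by (rule finite_subset[rotated]) blast
  qed (auto simp: minimal_prime_def)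
  then obtain a where a: "a \<in> I" "\<And>P. minimal_prime P R \<Longrightarrow> \<not> I \<subseteq> P \<Longrightarrow> a \<notin> P"
    by blast
  have "d = \<zero>" if "d \<in> I" "a \<otimes> d = \<zero>" for d
  proof (rule reduced_ring_eq_zero_if_mem_minimal_primes[OF assms(1)])
    show "d \<in> carrier R" using ideal.Icarr[OF assms(3) \<open>d \<in> I\<close>] .
    fix P assume "minimal_prime P R"
    then interpret P: primeideal P R unfolding minimal_prime_def by blast
    have "a \<otimes> d \<in> P"
      using that(2) additive_subgroup.zero_closed[OF P.additive_subgroup_axioms] by simp
    then show "d \<in> P"
      using a(2)[OF \<open>minimal_prime P R\<close>] P.I_prime ideal.Icarr[OF assms(3)] a(1) that(1) by blast
  qed
  then show ?thesis using a(1) by blast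
qed

lemma H_R_zero_reduced:
  fixes R :: "'a ring" (structure)
  assumes "cring R" "ideal I R" "reduced_ring R" "finite {P. minimal_prime P R}"
  shows "H_R_zero R I (self_module R)"
proof (rule H_R_zeroI)
  interpret cring R by fact
  interpret I: ideal I R by fact
  obtain a where a: "a \<in> I" "\<And>d. d \<in> I \<Longrightarrow> a \<otimes> d = \<zero> \<Longrightarrow> d = \<zero>"
    using reduced_ring_ex_regular_mem_ideal[OF assms(3,4,2)] by blast
  fix \<phi> assume \<phi>: "\<phi> \<in> Z_R R I (self_module R)"
  note \<phi>_hom = Z_R_Hom_ideal[OF \<phi>]
  obtain m where m: "m \<in> carrier R" "\<phi> a = a \<otimes> m"
    using Z_R_local[OF \<phi> a(1)] by auto
  have "\<phi> t = t \<otimes> m" if t: "t \<in> I" for t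
  proof -
    obtain r where "r \<in> carrier R" "\<phi> t = t \<otimes> r"
      using Z_R_local[OF \<phi> t] by auto
    then have "\<phi> t \<in> I" "t \<otimes> m \<in> I"
      using t m(1) I.I_r_closed by auto
    then have "\<phi> t \<ominus> t \<otimes> m \<in> I"
      unfolding minus_eq using I.a_closed I.a_inv_closed by blast
    moreover have "a \<otimes> (\<phi> t \<ominus> t \<otimes> m) = \<zero>"
      using Hom_ideal_swap[OF \<phi>_hom assms(2) a(1) t] m I.Icarr a(1) t \<open>\<phi> t \<in> I\<close>
      by (simp add: minus_eq r_distr r_minus r_neg m_lcomm)
    ultimately have "\<phi> t \<ominus> t \<otimes> m = \<zero>"
      by (rule a(2))
    then show ?thesis
      using I.Icarr t m(1) \<open>\<phi> t \<in> I\<close> by (simp add: add.inv_solve_right' minus_eq)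
  qed
  then show "\<exists>m\<in>carrier (self_module R). \<forall>t\<in>I. \<phi> t = t \<odot>\<^bsub>self_module R\<^esub> m"
    using m(1) by auto
qed

section \<open>Invertibility of ideals in Dedekind domains\<close>

lemma (in noetherian_ring) ex_maximal_ideal_in:
  assumes "S \<noteq> {}" "S \<subseteq> {I. ideal I R}"
  shows "\<exists>I\<in>S. \<forall>J\<in>S. I \<subseteq> J \<longrightarrow> J = I"
proof (rule subset_Zorn_nonempty[OF assms(1)])
  fix C assume C: "C \<noteq> {}" "subset.chain S C"
  then have "subset.chain {I. ideal I R} C"
    using assms(2) unfolding subset_chain_def by auto
  then have "\<Union>C \<in> C"
    by (rule ideal_chain_is_trivial[OF C(1)])
  then show "\<Union>C \<in> S"
    using C(2) unfolding subset_chain_def by auto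
qed

lemma (in ring) ex_maximalideal_above:
  assumes "ideal I R" "I \<noteq> carrier R"
  shows "\<exists>P. maximalideal P R \<and> I \<subseteq> P"
proof -
  define S where "S = {J. ideal J R \<and> I \<subseteq> J \<and> \<one> \<notin> J}"
  have "\<one> \<notin> I"
    using ideal.one_imp_carrier[OF assms(1)] assms(2) by auto
  then have "I \<in> S" using assms(1) unfolding S_def by auto
  moreover have "\<Union>C \<in> S" if C: "C \<noteq> {}" "subset.chain S C" for C
  proof -
    have "subset.chain {I. ideal I R} C"
      using C(2) unfolding S_def subset_chain_def by auto
    from chain_Union_is_ideal[OF this] have "ideal (\<Union>C) R"
      using C(1) by simp
    moreover have "I \<subseteq> \<Union>C" "\<one> \<notin> \<Union>C"
      using C unfolding S_def subset_chain_def by blast+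
    ultimately show ?thesis unfolding S_def by simp
  qed
  ultimately obtain P where P: "P \<in> S" "\<And>J. J \<in> S \<Longrightarrow> P \<subseteq> J \<Longrightarrow> J = P"
    using subset_Zorn_nonempty[of S] by blast
  have "maximalideal P R"
  proof (rule maximalidealI)
    show "ideal P R" "carrier R \<noteq> P" using P(1) unfolding S_def by auto
    fix J assume J: "ideal J R" "P \<subseteq> J" "J \<subseteq> carrier R"
    show "J = P \<or> J = carrier R"
    proof (cases "\<one> \<in> J")
      case True
      then show ?thesis using ideal.one_imp_carrier[OF J(1)] by simp
    next
      case False
      then have "J \<in> S" using J P(1) unfolding S_def by auto
      then show ?thesis using P(2) J(2) by simp
    qed
  qed
  then show ?thesis using P(1) unfolding S_def by auto
qed

lemma (in cring) lincombs_ideal: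
  assumes "finite A" "f \<in> A \<rightarrow> carrier R"
  shows "ideal {(\<Oplus>i\<in>A. r i \<otimes> f i) | r. r \<in> A \<rightarrow> carrier R} R" (is "ideal ?L R")
proof (rule ideal_closedI)
  show "?L \<subseteq> carrier R" using assms(2) by (auto intro!: finsum_closed)
  have "(\<Oplus>i\<in>A. \<zero> \<otimes> f i) = (\<Oplus>i\<in>A. \<zero>)"
    using assms(2) by (intro finsum_cong') (auto simp: Pi_iff)
  then have "(\<Oplus>i\<in>A. \<zero> \<otimes> f i) = \<zero>" by (simp add: finsum_zero)
  then show "\<zero> \<in> ?L" by force
next
  fix x y assume "x \<in> ?L" "y \<in> ?L"
  then obtain r s where rs: "r \<in> A \<rightarrow> carrier R" "s \<in> A \<rightarrow> carrier R"
    "x = (\<Oplus>i\<in>A. r i \<otimes> f i)" "y = (\<Oplus>i\<in>A. s i \<otimes> f i)" by auto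
  have "x \<oplus> y = (\<Oplus>i\<in>A. r i \<otimes> f i \<oplus> s i \<otimes> f i)"
    unfolding rs(3,4) using rs assms by (intro finsum_addf[symmetric]) auto
  also have "\<dots> = (\<Oplus>i\<in>A. (r i \<oplus> s i) \<otimes> f i)"
    using rs assms(2) by (intro finsum_cong') (auto simp: l_distr Pi_iff)
  finally show "x \<oplus> y \<in> ?L" using rs by force
next
  fix t x assume "t \<in> carrier R" "x \<in> ?L"
  then obtain r where r: "r \<in> A \<rightarrow> carrier R" "x = (\<Oplus>i\<in>A. r i \<otimes> f i)" by auto
  have "t \<otimes> x = (\<Oplus>i\<in>A. t \<otimes> (r i \<otimes> f i))"
    unfolding r(2) using r assms \<open>t \<in> carrier R\<close> by (intro finsum_rdistr) auto
  also have "\<dots> = (\<Oplus>i\<in>A. (t \<otimes> r i) \<otimes> f i)"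
    using r assms(2) \<open>t \<in> carrier R\<close> by (intro finsum_cong') (auto simp: m_assoc Pi_iff)
  finally show "t \<otimes> x \<in> ?L" using r \<open>t \<in> carrier R\<close> by force
qed

lemma (in cring) mem_genideal_finite_imp_lincomb:
  assumes "finite A" "f \<in> A \<rightarrow> carrier R" "x \<in> Idl (f ` A)"
  shows "\<exists>r\<in>A \<rightarrow> carrier R. x = (\<Oplus>i\<in>A. r i \<otimes> f i)"
proof -
  have "f j \<in> {(\<Oplus>i\<in>A. r i \<otimes> f i) | r. r \<in> A \<rightarrow> carrier R}" if "j \<in> A" for j
  proof -
    have "(\<Oplus>i\<in>A. (if j = i then \<one> else \<zero>) \<otimes> f i) = (\<Oplus>i\<in>A. if j = i then f i else \<zero>)"
      using assms(2) by (intro finsum_cong') (auto simp: Pi_iff)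
    also have "\<dots> = f j"
      using finsum_singleton[of j A f] that assms(1,2) by auto
    finally have combination: "f j = (\<Oplus>i\<in>A. (if j = i then \<one> else \<zero>) \<otimes> f i)" ..
    show ?thesis unfolding mem_Collect_eq
    proof (intro exI conjI)
      show "(\<lambda>i. if j = i then \<one> else \<zero>) \<in> A \<rightarrow> carrier R" by simp
    qed (fact combination)
  qed
  then have "Idl (f ` A) \<subseteq> {(\<Oplus>i\<in>A. r i \<otimes> f i) | r. r \<in> A \<rightarrow> carrier R}"
    by (intro genideal_minimal[OF lincombs_ideal[OF assms(1,2)]]) auto
  then show ?thesis using assms(3) by blast
qed

lemma (in noetherian_ring) ex_lincomb_of_predecessors:
  assumes "cring R" "range e \<subseteq> carrier R"
  shows "\<exists>N. \<exists>r\<in>{..N} \<rightarrow> carrier R. e (Suc N) = (\<Oplus>i\<in>{..N}. r i \<otimes> e i)"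
proof -
  interpret cring R by fact
  have e_carrier: "e ` A \<subseteq> carrier R" for A using assms(2) by auto
  define Ch where "Ch = range (\<lambda>n. Idl (e ` {..n}))"
  have mono: "Idl (e ` {..n}) \<subseteq> Idl (e ` {..m})" if "n \<le> m" for n m
    using that by (intro subset_Idl_subset e_carrier image_mono) auto
  have "subset.chain {I. ideal I R} Ch"
    unfolding subset_chain_def Ch_def
    using genideal_ideal[OF e_carrier] mono nat_le_linear by blast
  then have "\<Union>Ch \<in> Ch"
    by (rule ideal_chain_is_trivial[rotated]) (simp add: Ch_def)
  then obtain N where N: "\<Union>Ch = Idl (e ` {..N})"
    unfolding Ch_def by blast
  have "e (Suc N) \<in> Idl (e ` {..Suc N})"
    using genideal_self[OF e_carrier] by blast
  then have "e (Suc N) \<in> Idl (e ` {..N})"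
    using N unfolding Ch_def by blast
  then show ?thesis
    using mem_genideal_finite_imp_lincomb[of "{..N}" e] assms(2) by blast
qed

lemma (in cring) ratio_sequence_pow:
  assumes "a \<in> carrier R" "b \<in> carrier R" "range e \<subseteq> carrier R"
    and "\<And>n. a \<otimes> e (Suc n) = b \<otimes> e n"
  shows "a [^] n \<otimes> e n = b [^] n \<otimes> e 0"
proof (induction n)
  case (Suc n)
  have e: "e k \<in> carrier R" for k using assms(3) by auto
  have "a [^] Suc n \<otimes> e (Suc n) = a [^] n \<otimes> (a \<otimes> e (Suc n))"
    using assms(1) e by (simp add: m_assoc)
  also have "\<dots> = b \<otimes> (a [^] n \<otimes> e n)"
    using assms(1,2,4) e by (simp add: m_lcomm)
  also have "\<dots> = b [^] Suc n \<otimes> e 0"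
    using Suc assms(2) e by (simp add: m_ac)
  finally show ?case .
qed (use assms(3) in auto)

text \<open>With \<open>e n = (b/a)\<^sup>n e 0\<close> in the fraction field, the ascending chain condition applied to
  the ideals generated by \<open>e 0, \<dots>, e n\<close> shows that \<open>b/a\<close> is integral over \<open>R\<close>.\<close>

lemma (in noetherian_domain) ratio_sequence_integral:
  assumes "a \<in> carrier R" "b \<in> carrier R" "range e \<subseteq> carrier R" "e 0 \<noteq> \<zero>"
    and step: "\<And>n. a \<otimes> e (Suc n) = b \<otimes> e n"
  shows "\<exists>N. \<exists>r\<in>{..N} \<rightarrow> carrier R.
           b [^] Suc N = (\<Oplus>i\<in>{..N}. r i \<otimes> b [^] i \<otimes> a [^] (Suc N - i))"
proof -
  have e: "e n \<in> carrier R" for n using assms(3) by auto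
  note pow = ratio_sequence_pow[OF assms(1-3) step]
  obtain N r where r: "r \<in> {..N} \<rightarrow> carrier R" "e (Suc N) = (\<Oplus>i\<in>{..N}. r i \<otimes> e i)"
    using ex_lincomb_of_predecessors[OF is_cring assms(3)] by blast
  have r_i: "r i \<in> carrier R" if "i \<le> N" for i using r(1) that by auto
  have summand: "a [^] Suc N \<otimes> (r i \<otimes> e i) = (r i \<otimes> b [^] i \<otimes> a [^] (Suc N - i)) \<otimes> e 0"
    if "i \<le> N" for i
  proof -
    have "a [^] Suc N = a [^] (Suc N - i) \<otimes> a [^] i"
      using that assms(1) by (simp add: nat_pow_mult)
    then have "a [^] Suc N \<otimes> (r i \<otimes> e i) = (r i \<otimes> a [^] (Suc N - i)) \<otimes> (a [^] i \<otimes> e i)"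
      using assms(1) r_i[OF that] e by (simp add: m_ac)
    also have "\<dots> = (r i \<otimes> b [^] i \<otimes> a [^] (Suc N - i)) \<otimes> e 0"
      using pow assms(1,2) r_i[OF that] e by (simp add: m_ac)
    finally show ?thesis .
  qed
  have "b [^] Suc N \<otimes> e 0 = (\<Oplus>i\<in>{..N}. a [^] Suc N \<otimes> (r i \<otimes> e i))"
    unfolding pow[symmetric] r(2) using r(1) e assms(1) by (intro finsum_rdistr) auto
  also have "\<dots> = (\<Oplus>i\<in>{..N}. (r i \<otimes> b [^] i \<otimes> a [^] (Suc N - i)) \<otimes> e 0)"
    using summand r_i assms(1,2) e by (intro finsum_cong') auto
  also have "\<dots> = (\<Oplus>i\<in>{..N}. r i \<otimes> b [^] i \<otimes> a [^] (Suc N - i)) \<otimes> e 0"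
    using r_i assms(1,2) e by (intro finsum_ldistr[symmetric]) auto
  finally have "b [^] Suc N = (\<Oplus>i\<in>{..N}. r i \<otimes> b [^] i \<otimes> a [^] (Suc N - i))"
    using m_rcancel[OF assms(4) e] r_i assms(1,2) by (auto intro!: finsum_closed)
  then show ?thesis using r(1) by blast
qed

lemma (in ring) add_finsum_neg_eq_zero:
  assumes "finite A" "f \<in> A \<rightarrow> carrier R"
  shows "(\<Oplus>i\<in>A. f i) \<oplus> (\<Oplus>i\<in>A. \<ominus> f i) = \<zero>"
proof -
  have "(\<Oplus>i\<in>A. f i) \<oplus> (\<Oplus>i\<in>A. \<ominus> f i) = (\<Oplus>i\<in>A. f i \<oplus> \<ominus> f i)"
    using assms by (intro finsum_addf[symmetric]) auto
  also have "\<dots> = (\<Oplus>i\<in>A. \<zero>)"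
    using assms(2) by (intro finsum_cong') (auto simp: r_neg Pi_iff)
  finally show ?thesis by (simp add: finsum_zero)
qed

lemma (in noetherian_domain) integrally_closed_stable_imp_dvd:
  assumes "integrally_closed R" "a \<in> carrier R" "a \<noteq> \<zero>" "b \<in> carrier R"
    and "K \<subseteq> carrier R" "x0 \<in> K" "x0 \<noteq> \<zero>"
    and stable: "\<And>g. g \<in> K \<Longrightarrow> \<exists>g'\<in>K. b \<otimes> g = a \<otimes> g'"
  shows "b \<in> PIdl a"
proof -
  obtain h where h: "\<And>g. g \<in> K \<Longrightarrow> h g \<in> K \<and> b \<otimes> g = a \<otimes> h g"
    using bchoice[of K "\<lambda>g g'. g' \<in> K \<and> b \<otimes> g = a \<otimes> g'"] stable by blast
  define e where "e n = (h ^^ n) x0" for n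
  have "e n \<in> K" for n
    by (induction n) (simp_all add: e_def assms(6) h)
  then have "range e \<subseteq> carrier R" "\<And>n. a \<otimes> e (Suc n) = b \<otimes> e n"
    using assms(5) h by (auto simp: e_def)
  moreover have "e 0 \<noteq> \<zero>" by (simp add: e_def assms(7))
  ultimately obtain N r where r: "r \<in> {..N} \<rightarrow> carrier R"
    and integral: "b [^] Suc N = (\<Oplus>i\<in>{..N}. r i \<otimes> b [^] i \<otimes> a [^] (Suc N - i))"
    using ratio_sequence_integral[OF assms(2,4)] by blast
  define c where "c i = \<ominus> r i" for i
  have "(\<Oplus>i\<in>{..<Suc N}. c i \<otimes> b [^] i \<otimes> a [^] (Suc N - i))
      = (\<Oplus>i\<in>{..N}. \<ominus> (r i \<otimes> b [^] i \<otimes> a [^] (Suc N - i)))"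
    unfolding lessThan_Suc_atMost using r assms(2,4)
    by (intro finsum_cong') (auto simp: c_def l_minus Pi_iff)
  then have "b [^] Suc N \<oplus> (\<Oplus>i\<in>{..<Suc N}. c i \<otimes> b [^] i \<otimes> a [^] (Suc N - i))
      = (\<Oplus>i\<in>{..N}. r i \<otimes> b [^] i \<otimes> a [^] (Suc N - i))
        \<oplus> (\<Oplus>i\<in>{..N}. \<ominus> (r i \<otimes> b [^] i \<otimes> a [^] (Suc N - i)))"
    unfolding integral by simp
  also have "\<dots> = \<zero>"
    using r assms(2,4) by (intro add_finsum_neg_eq_zero) auto
  finally have "b [^] Suc N \<oplus> (\<Oplus>i\<in>{..<Suc N}. c i \<otimes> b [^] i \<otimes> a [^] (Suc N - i)) = \<zero>" .
  moreover have "c \<in> {..<Suc N} \<rightarrow> carrier R"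
    using r by (auto simp: c_def Pi_iff less_Suc_eq_le)
  moreover have "a \<in> carrier R - {\<zero>}"
    using assms(2,3) by simp
  ultimately obtain x where "x \<in> carrier R" "b = a \<otimes> x"
    using assms(1)[unfolded integrally_closed_def, rule_format, OF assms(4), of a "Suc N" c] by auto
  then have "b = x \<otimes> a"
    using assms(2) by (simp add: m_comm)
  then show ?thesis
    unfolding cgenideal_def using \<open>x \<in> carrier R\<close> by blast
qed

context noetherian_domain begin

lemma nonzero_ideal_contains_prime_product:
  assumes "ideal I R" "I \<noteq> {\<zero>}"
  shows "\<exists>Ps. (\<forall>P\<in>set Ps. primeideal P R \<and> P \<noteq> {\<zero>}) \<and> ideal_listprod R Ps \<subseteq> I"
proof (rule ccontr)
  define good where "good J \<longleftrightarrow>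
    (\<exists>Ps. (\<forall>P\<in>set Ps. primeideal P R \<and> P \<noteq> {\<zero>}) \<and> ideal_listprod R Ps \<subseteq> J)" for J
  define S where "S = {J. ideal J R \<and> J \<noteq> {\<zero>} \<and> \<not> good J}"
  assume "\<not> good I"
  then have "\<exists>J\<in>S. \<forall>J'\<in>S. J \<subseteq> J' \<longrightarrow> J' = J"
    using assms by (intro ex_maximal_ideal_in) (auto simp: S_def)
  then obtain J where J: "ideal J R" "J \<noteq> {\<zero>}" "\<not> good J"
    and J_max: "\<And>J'. J' \<in> S \<Longrightarrow> J \<subseteq> J' \<Longrightarrow> J' = J"
    unfolding S_def by blast
  have "J \<noteq> carrier R"
  proof
    assume "J = carrier R"
    then have "good J"
      unfolding good_def by (intro exI[of _ "[]"]) simp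
    with J(3) show False ..
  qed
  moreover have "good (J <+>\<^bsub>R\<^esub> PIdl x)" if "x \<in> carrier R" "x \<notin> J" for x
  proof (rule ccontr)
    assume "\<not> good (J <+>\<^bsub>R\<^esub> PIdl x)"
    then have "J <+>\<^bsub>R\<^esub> PIdl x \<in> S"
      using set_add_PIdl[OF J(1) that(1)] J(2) additive_subgroup.zero_closed[OF ideal.axioms(1)[OF J(1)]]
      unfolding S_def by blast
    then show False
      using J_max set_add_PIdl[OF J(1) that(1)] that(2) by blast
  qed
  moreover have "good (K \<cdot> L)" if "ideal K R" "ideal L R" and K: "good K" and L: "good L" for K L
  proof -
    obtain Ps where Ps: "\<forall>P\<in>set Ps. primeideal P R \<and> P \<noteq> {\<zero>}" "ideal_listprod R Ps \<subseteq> K"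
      using K unfolding good_def by blast
    obtain Qs where Qs: "\<forall>P\<in>set Qs. primeideal P R \<and> P \<noteq> {\<zero>}" "ideal_listprod R Qs \<subseteq> L"
      using L unfolding good_def by blast
    have "ideal_listprod R (Ps @ Qs) = ideal_listprod R Ps \<cdot> ideal_listprod R Qs"
      using Ps(1) Qs(1) primeideal.axioms(1) by (intro ideal_listprod_append) blast+
    also have "\<dots> \<subseteq> K \<cdot> L"
      by (rule ideal_prod_mono[OF Ps(2) Qs(2)])
    finally show ?thesis
      unfolding good_def using Ps(1) Qs(1) by (intro exI[of _ "Ps @ Qs"]) auto
  qed
  moreover have "good L" if K: "good K" and "K \<subseteq> L" for K L
  proof -
    obtain Ps where "\<forall>P\<in>set Ps. primeideal P R \<and> P \<noteq> {\<zero>}" "ideal_listprod R Ps \<subseteq> K"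
      using K unfolding good_def by blast
    then show ?thesis
      unfolding good_def using \<open>K \<subseteq> L\<close> by (intro exI[of _ Ps]) auto
  qed
  ultimately have "primeideal J R"
    by (rule primeideal_if_enlargements_have[where P = good, OF J(1) _ J(3)])
  then have "good J"
    unfolding good_def using J(2) ideal_prod_one[OF J(1)] by (intro exI[of _ "[J]"]) simp
  with J(3) show False ..
qed

lemma maximalideal_prime_product_cofactor:
  assumes dim: "\<And>P. primeideal P R \<Longrightarrow> P \<noteq> {\<zero>} \<Longrightarrow> maximalideal P R"
    and "maximalideal P R" "ideal K R" "K \<noteq> {\<zero>}" "K \<subseteq> P"
  shows "\<exists>Ps. (\<forall>Q\<in>set Ps. primeideal Q R \<and> Q \<noteq> {\<zero>}) \<and>
           P \<cdot> ideal_listprod R Ps \<subseteq> K \<and> \<not> ideal_listprod R Ps \<subseteq> K"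
proof -
  interpret P: maximalideal P R by fact
  define L where "L = {Ps. (\<forall>Q\<in>set Ps. primeideal Q R \<and> Q \<noteq> {\<zero>}) \<and> ideal_listprod R Ps \<subseteq> K}"
  obtain Ps0 where "Ps0 \<in> L"
    using nonzero_ideal_contains_prime_product[OF assms(3,4)] unfolding L_def by blast
  then obtain Ps where "Ps \<in> L" and shortest: "\<And>Qs. Qs \<in> L \<Longrightarrow> length Ps \<le> length Qs"
    using ex_has_least_nat[of "\<lambda>Ps. Ps \<in> L" Ps0 length] by blast
  then have primes: "\<forall>Q\<in>set Ps. primeideal Q R \<and> Q \<noteq> {\<zero>}" and "ideal_listprod R Ps \<subseteq> K"
    unfolding L_def by auto
  have ideals: "\<And>Q. Q \<in> set Ps \<Longrightarrow> ideal Q R"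
    using primes primeideal.axioms(1) by blast
  obtain Q where Q: "Q \<in> set Ps" "Q \<subseteq> P"
    using primeideal_ideal_listprod[OF maximalideal_prime[OF assms(2)] ideals]
      \<open>ideal_listprod R Ps \<subseteq> K\<close> assms(5) by blast
  have "maximalideal Q R" using dim primes Q(1) by blast
  then have "Q = P"
    using maximalideal.I_maximal[OF _ P.is_ideal Q(2)] P.I_notcarr P.Icarr by blast
  define Ps' where "Ps' = remove1 P Ps"
  have "length Ps' < length Ps"
    unfolding Ps'_def using Q \<open>Q = P\<close> length_pos_if_in_set[of P Ps] by (simp add: length_remove1)
  moreover have primes': "\<forall>Q\<in>set Ps'. primeideal Q R \<and> Q \<noteq> {\<zero>}"
    unfolding Ps'_def using primes notin_set_remove1 by metis
  ultimately have "\<not> ideal_listprod R Ps' \<subseteq> K"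
    using shortest[of Ps'] unfolding L_def by fastforce
  moreover have "P \<cdot> ideal_listprod R Ps' \<subseteq> K"
    unfolding Ps'_def using ideal_listprod_remove1[OF _ ideals] Q \<open>Q = P\<close> \<open>ideal_listprod R Ps \<subseteq> K\<close>
    by auto
  ultimately show ?thesis using primes' by blast
qed

lemma maximalideal_quotient_exceeds_PIdl:
  assumes dim: "\<And>P. primeideal P R \<Longrightarrow> P \<noteq> {\<zero>} \<Longrightarrow> maximalideal P R"
    and "maximalideal P R" "P \<noteq> {\<zero>}"
  shows "\<exists>a\<in>P. a \<noteq> \<zero> \<and> \<not> ideal_quotient R (PIdl a) P \<subseteq> PIdl a"
proof -
  interpret P: maximalideal P R by fact
  obtain a where a: "a \<in> P" "a \<noteq> \<zero>"
    using assms(3) P.zero_closed by blast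
  have "a \<in> carrier R" using P.Icarr[OF a(1)] .
  have "PIdl a \<noteq> {\<zero>}"
    using cgenideal_self[OF \<open>a \<in> carrier R\<close>] a(2) by blast
  then obtain Ps where primes: "\<forall>Q\<in>set Ps. primeideal Q R \<and> Q \<noteq> {\<zero>}"
    and "P \<cdot> ideal_listprod R Ps \<subseteq> PIdl a" "\<not> ideal_listprod R Ps \<subseteq> PIdl a"
    using maximalideal_prime_product_cofactor[OF dim assms(2) cgenideal_ideal[OF \<open>a \<in> carrier R\<close>]]
      cgenideal_minimal[OF P.is_ideal a(1)] by blast
  then obtain b where b: "b \<in> ideal_listprod R Ps" "b \<notin> PIdl a" by blast
  have "b \<in> carrier R"
    using ideal.Icarr[OF ideal_listprod_ideal b(1)] primes primeideal.axioms(1) by blast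
  have "b \<otimes> p \<in> PIdl a" if "p \<in> P" for p
    using ideal_prod.prod[of p P b "ideal_listprod R Ps" R] that b(1) \<open>b \<in> carrier R\<close> P.Icarr[OF that]
      \<open>P \<cdot> ideal_listprod R Ps \<subseteq> PIdl a\<close> m_comm by auto
  then have "b \<in> ideal_quotient R (PIdl a) P"
    unfolding ideal_quotient_def using \<open>b \<in> carrier R\<close> by blast
  then show ?thesis using a b(2) by blast
qed

text \<open>\<open>ideal_quotient R (J \<cdot> Q) (PIdl c)\<close> is the fractional ideal \<open>c\<^sup>-\<^sup>1 J Q\<close>. Were it equal to \<open>J\<close>,
  every \<open>q/c\<close> with \<open>q \<in> Q\<close> would map the nonzero ideal \<open>J\<close> into itself, hence be integral over \<open>R\<close>,
  forcing \<open>Q \<subseteq> (c)\<close>.\<close>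

lemma ideal_quotient_prod_psupset:
  assumes "integrally_closed R" "c \<in> carrier R" "c \<noteq> \<zero>"
    and "ideal J R" "J \<noteq> {\<zero>}" "ideal Q R" "c \<in> Q" "J \<cdot> Q \<subseteq> PIdl c" "\<not> Q \<subseteq> PIdl c"
  shows "J \<subset> ideal_quotient R (J \<cdot> Q) (PIdl c)"
proof -
  interpret J: ideal J R by fact
  interpret Q: ideal Q R by fact
  note quotient_iff = mem_ideal_quotient_PIdl[OF ideal_prod_is_ideal[OF assms(4,6)] assms(2)]
  have "J \<subseteq> ideal_quotient R (J \<cdot> Q) (PIdl c)"
    by (rule subset_ideal_quotient_prod_PIdl[OF assms(4,6,7)])
  moreover have "ideal_quotient R (J \<cdot> Q) (PIdl c) \<noteq> J"
  proof
    assume fixed: "ideal_quotient R (J \<cdot> Q) (PIdl c) = J"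
    obtain q where q: "q \<in> Q" "q \<notin> PIdl c" using assms(9) by blast
    obtain x0 where x0: "x0 \<in> J" "x0 \<noteq> \<zero>" using assms(5) J.zero_closed by blast
    have "q \<in> PIdl c"
    proof (rule integrally_closed_stable_imp_dvd[OF assms(1-3) Q.Icarr[OF q(1)] _ x0])
      show "J \<subseteq> carrier R" using J.Icarr by blast
      fix g assume "g \<in> J"
      have "g \<otimes> q \<in> J \<cdot> Q" using ideal_prod.prod[of g J q Q R] \<open>g \<in> J\<close> q(1) by simp
      then obtain x where x: "x \<in> carrier R" "g \<otimes> q = x \<otimes> c"
        using assms(8) unfolding cgenideal_def by blast
      then have "q \<otimes> g = c \<otimes> x"
        using J.Icarr[OF \<open>g \<in> J\<close>] Q.Icarr[OF q(1)] assms(2) by (simp add: m_comm)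
      moreover have "x \<in> J"
        using quotient_iff fixed \<open>g \<otimes> q \<in> J \<cdot> Q\<close> x calculation J.Icarr[OF \<open>g \<in> J\<close>] Q.Icarr[OF q(1)]
          m_comm by auto
      ultimately show "\<exists>g'\<in>J. q \<otimes> g = c \<otimes> g'" by blast
    qed
    with q(2) show False ..
  qed
  ultimately show ?thesis by blast
qed

lemma maximalideal_prod_quotient_PIdl:
  assumes "integrally_closed R"
    and dim: "\<And>P. primeideal P R \<Longrightarrow> P \<noteq> {\<zero>} \<Longrightarrow> maximalideal P R"
    and "maximalideal P R" "P \<noteq> {\<zero>}"
  shows "\<exists>c\<in>carrier R. c \<noteq> \<zero> \<and> P \<cdot> ideal_quotient R (PIdl c) P = PIdl c"
proof -
  interpret P: maximalideal P R by fact
  obtain a where a: "a \<in> P" "a \<noteq> \<zero>" and exceeds: "\<not> ideal_quotient R (PIdl a) P \<subseteq> PIdl a"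
    using maximalideal_quotient_exceeds_PIdl[OF dim assms(3,4)] by blast
  have "a \<in> carrier R" "P \<subseteq> carrier R" using P.Icarr a(1) by auto
  define Q where "Q = ideal_quotient R (PIdl a) P"
  have Q: "ideal Q R"
    unfolding Q_def using ideal_quotient_ideal[OF cgenideal_ideal] \<open>a \<in> carrier R\<close> \<open>P \<subseteq> carrier R\<close> by blast
  have PQ: "P \<cdot> Q \<subseteq> PIdl a"
    unfolding Q_def using ideal_prod_ideal_quotient[OF cgenideal_ideal] \<open>a \<in> carrier R\<close> \<open>P \<subseteq> carrier R\<close> by blast
  have "a \<in> Q"
    unfolding Q_def using ideal_quotient_upper[OF cgenideal_ideal] cgenideal_self \<open>a \<in> carrier R\<close> \<open>P \<subseteq> carrier R\<close>
    by blast
  define P' where "P' = ideal_quotient R (P \<cdot> Q) (PIdl a)"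
  have "ideal P' R"
    unfolding P'_def using ideal_quotient_ideal[OF ideal_prod_is_ideal[OF P.is_ideal Q]]
      ideal.Icarr[OF cgenideal_ideal[OF \<open>a \<in> carrier R\<close>]] by blast
  moreover have "P \<subset> P'"
    unfolding P'_def using ideal_quotient_prod_psupset[OF assms(1) \<open>a \<in> carrier R\<close> a(2) P.is_ideal assms(4)
      Q \<open>a \<in> Q\<close> PQ] exceeds unfolding Q_def by blast
  ultimately have "P' = carrier R"
    using P.I_maximal[of P'] ideal.Icarr[OF \<open>ideal P' R\<close>] by blast
  then have "a \<in> P \<cdot> Q"
    using mem_ideal_quotient_PIdl[OF ideal_prod_is_ideal[OF P.is_ideal Q] \<open>a \<in> carrier R\<close>, of \<one>]
      \<open>a \<in> carrier R\<close> unfolding P'_def by simp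
  then have "P \<cdot> Q = PIdl a"
    using PQ cgenideal_minimal[OF ideal_prod_is_ideal[OF P.is_ideal Q]] by blast
  then show ?thesis
    using \<open>a \<in> carrier R\<close> a(2) unfolding Q_def by blast
qed

end

lemma (in domain) ideal_prod_eq_PIdl_not_subset:
  assumes "ideal P R" "P \<noteq> carrier R" "ideal Q R" "c \<in> carrier R" "c \<noteq> \<zero>" "P \<cdot> Q = PIdl c"
  shows "\<not> Q \<subseteq> PIdl c"
proof
  assume "Q \<subseteq> PIdl c"
  then have "P \<cdot> Q \<subseteq> P \<cdot> (PIdl c)"
    by (rule ideal_prod_mono[OF subset_refl])
  then have "PIdl c \<subseteq> (PIdl c) \<cdot> P"
    using assms(6) ideal_prod_commute[OF assms(1) cgenideal_ideal[OF assms(4)]] by simp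
  then obtain p where "p \<in> P" "c = c \<otimes> p"
    using PIdl_ideal_prod[OF assms(1,4)] cgenideal_self[OF assms(4)] by blast
  then have "p = \<one>"
    using m_lcancel[OF assms(5,4) one_closed ideal.Icarr[OF assms(1) \<open>p \<in> P\<close>]] assms(4) by simp
  then show False
    using \<open>p \<in> P\<close> ideal.one_imp_carrier[OF assms(1)] assms(2) by simp
qed

lemma (in domain) invertible_ideal_if_prod_eq:
  assumes "ideal J R" "ideal Q R" "ideal J' R" "c \<in> carrier R" "c \<noteq> \<zero>"
    and "J \<cdot> Q = (PIdl c) \<cdot> J'" "invertible_ideal R J'"
  shows "invertible_ideal R J"
proof -
  obtain c' Q' where Q': "c' \<in> carrier R" "c' \<noteq> \<zero>" "ideal Q' R" "J' \<cdot> Q' = PIdl c'"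
    using assms(7) unfolding invertible_ideal_def by blast
  have "J \<cdot> (Q \<cdot> Q') = (J \<cdot> Q) \<cdot> Q'"
    using ideal_prod_assoc[OF assms(1,2) Q'(3)] by simp
  also have "\<dots> = (PIdl c) \<cdot> (PIdl c')"
    using assms(6) ideal_prod_assoc[OF cgenideal_ideal[OF assms(4)] assms(3) Q'(3)] Q'(4) by simp
  also have "\<dots> = PIdl (c \<otimes> c')"
    by (rule ideal_prod_PIdl[OF assms(4) Q'(1)])
  finally show ?thesis
    unfolding invertible_ideal_def
    using assms(4,5) Q'(1,2) ideal_prod_is_ideal[OF assms(2) Q'(3)] integral_iff by auto
qed

context noetherian_domain begin

lemma proper_ideal_enlargement:
  assumes "integrally_closed R"
    and dim: "\<And>P. primeideal P R \<Longrightarrow> P \<noteq> {\<zero>} \<Longrightarrow> maximalideal P R"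
    and "ideal J R" "J \<noteq> {\<zero>}" "J \<noteq> carrier R"
  shows "\<exists>J' Q c. ideal J' R \<and> J \<subset> J' \<and> ideal Q R \<and> c \<in> carrier R \<and> c \<noteq> \<zero> \<and>
           J \<cdot> Q = (PIdl c) \<cdot> J'"
proof -
  obtain P where "maximalideal P R" "J \<subseteq> P"
    using ex_maximalideal_above[OF assms(3,5)] by blast
  interpret P: maximalideal P R by fact
  have "P \<noteq> {\<zero>}" using \<open>J \<subseteq> P\<close> assms(4) additive_subgroup.zero_closed[OF ideal.axioms(1)[OF assms(3)]] by blast
  then obtain c where c: "c \<in> carrier R" "c \<noteq> \<zero>" and PQ: "P \<cdot> ideal_quotient R (PIdl c) P = PIdl c"
    using maximalideal_prod_quotient_PIdl[OF assms(1) dim \<open>maximalideal P R\<close>] by blast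
  define Q where "Q = ideal_quotient R (PIdl c) P"
  have "P \<subseteq> carrier R" using P.Icarr by blast
  have Q: "ideal Q R" "c \<in> Q"
    unfolding Q_def using ideal_quotient_ideal[OF cgenideal_ideal[OF c(1)] \<open>P \<subseteq> carrier R\<close>]
      ideal_quotient_upper[OF cgenideal_ideal[OF c(1)] \<open>P \<subseteq> carrier R\<close>] cgenideal_self[OF c(1)]
    by auto
  have "J \<cdot> Q \<subseteq> P \<cdot> Q"
    by (rule ideal_prod_mono[OF \<open>J \<subseteq> P\<close> subset_refl])
  then have JQ: "J \<cdot> Q \<subseteq> PIdl c"
    using PQ unfolding Q_def by simp
  define J' where "J' = ideal_quotient R (J \<cdot> Q) (PIdl c)"
  have "ideal J' R"
    unfolding J'_def using ideal_quotient_ideal[OF ideal_prod_is_ideal[OF assms(3) Q(1)]]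
      ideal.Icarr[OF cgenideal_ideal[OF c(1)]] by blast
  moreover have "J \<subset> J'"
    unfolding J'_def using ideal_quotient_prod_psupset[OF assms(1) c assms(3,4) Q JQ]
      ideal_prod_eq_PIdl_not_subset[OF P.is_ideal P.I_notcarr[symmetric] Q(1) c PQ[folded Q_def]] .
  moreover have "J \<cdot> Q = (PIdl c) \<cdot> J'"
    unfolding J'_def by (rule PIdl_ideal_prod_ideal_quotient[OF ideal_prod_is_ideal[OF assms(3) Q(1)] c(1) JQ])
  ultimately show ?thesis using Q(1) c by blast
qed

lemma nonzero_ideal_invertible:
  assumes "integrally_closed R"
    and dim: "\<And>P. primeideal P R \<Longrightarrow> P \<noteq> {\<zero>} \<Longrightarrow> maximalideal P R"
    and "ideal I R" "I \<noteq> {\<zero>}"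
  shows "invertible_ideal R I"
proof (rule ccontr)
  define S where "S = {J. ideal J R \<and> J \<noteq> {\<zero>} \<and> \<not> invertible_ideal R J}"
  assume "\<not> invertible_ideal R I"
  then have "\<exists>J\<in>S. \<forall>J'\<in>S. J \<subseteq> J' \<longrightarrow> J' = J"
    using assms(3,4) by (intro ex_maximal_ideal_in) (auto simp: S_def)
  then obtain J where J: "ideal J R" "J \<noteq> {\<zero>}" "\<not> invertible_ideal R J"
    and J_max: "\<And>J'. J' \<in> S \<Longrightarrow> J \<subseteq> J' \<Longrightarrow> J' = J"
    unfolding S_def by blast
  have "J \<noteq> carrier R"
  proof
    assume "J = carrier R"
    then have "J \<cdot> carrier R = PIdl \<one>"
      using ideal_prod_one[OF J(1)] cgenideal_eq_genideal[OF one_closed] genideal_one by simp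
    then show False
      using J(3) oneideal one_closed one_not_zero unfolding invertible_ideal_def by blast
  qed
  then obtain J' Q c where J': "ideal J' R" "J \<subset> J'" and Q: "ideal Q R" and c: "c \<in> carrier R" "c \<noteq> \<zero>"
    and JQ: "J \<cdot> Q = (PIdl c) \<cdot> J'"
    using proper_ideal_enlargement[OF assms(1) dim J(1,2)] by blast
  have "invertible_ideal R J'"
  proof (rule ccontr)
    assume "\<not> invertible_ideal R J'"
    moreover have "J' \<noteq> {\<zero>}"
      using J'(2) J(2) additive_subgroup.zero_closed[OF ideal.axioms(1)[OF J(1)]] by blast
    ultimately have "J' \<in> S"
      using J'(1) unfolding S_def by blast
    then show False
      using J_max J'(2) by blast
  qed
  then have "invertible_ideal R J"
    using invertible_ideal_if_prod_eq[OF J(1) Q J'(1) c JQ] by blast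
  with J(3) show False ..
qed

end

lemma (in module) H_R_zero_dedekind:
  assumes "dedekind_domain R" "ideal I R"
  shows "H_R_zero R I M"
proof -
  interpret noetherian_domain R
    using assms(1) unfolding dedekind_domain_def by blast
  show ?thesis
  proof (cases "I = {\<zero>}")
    case True
    then show ?thesis using H_R_zero_principal zeropideal by simp
  next
    case False
    then have "invertible_ideal R I"
      using nonzero_ideal_invertible assms unfolding dedekind_domain_def by blast
    then show ?thesis by (rule H_R_zero_invertible[OF domain_axioms assms(2)])
  qed
qed

theorem proposition5p6:
  fixes R :: "'a ring" and I :: "'a set" and M :: "('a, 'b) module"
  assumes "cring R" and "ideal I R" and "module R M"
  shows "(principalideal I R \<longrightarrow> H_R_zero R I M)
       \<and> (domain R \<and> torsion_free R M \<longrightarrow> H_R_zero R I M)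
       \<and> (dedekind_domain R \<longrightarrow> H_R_zero R I M)
       \<and> (reduced_ring R \<and> finite {P. minimal_prime P R} \<longrightarrow> H_R_zero R I (self_module R))"
proof -
  interpret module R M by fact
  show ?thesis
    using H_R_zero_principal H_R_zero_torsion_free[OF assms(2)] H_R_zero_dedekind[OF _ assms(2)]
      H_R_zero_reduced[OF assms(1,2)] by blast
qed

end
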